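(* Let $P$ be a joint distribution arising from the GTR+$\mu$ model on the 3-taxon tree with leaves $a,b,c$ attached by pendant edges of lengths $t_a,t_b,t_c$ to a single internal vertex. Let $L(u)=\mathbb E_\mu[e^{ru}]$ for $u\le 0$. Then the following are uniquely determined by $P$: (1) $\boldsymbol\pi$ (from the 1-taxon marginals); (2) the set of all matrices $U$ diagonalizing $Q$ as in the context, and, for every $i\in[\kappa]$, the values $L(\lambda_i(t_a+t_b))$, $L(\lambda_i(t_a+t_c))$, $L(\lambda_i(t_b+t_c))$ (from the 2-taxon marginals); (3) for some such choice of $U$, the values $L(\lambda_i t_a+\lambda_j t_b+\lambda_k t_c)$ for all $i,j,k\in[\kappa]$ with $\nu_{ijk}\neq0$.
   Context: GTR+$\mu$ model with $\kappa$ states: $\boldsymbol\pi$ with positive entries summing to $1$; $Q$ with positive off-diagonal entries, zero row sums, $\operatorname{diag}(\boldsymbol\pi)Q$ symmetric and of trace $-1$; $\mu$ a distribution of rates on $[0,\infty)$ with mean $1$; edge lengths $t_a,t_b,t_c\ge0$ with no two taxa at total distance $0$. The joint distribution is $P(i,j,k)=\int\sum_{h}\pi_h\exp(t_arQ)_{hi}\exp(t_brQ)_{hj}\exp(t_crQ)_{hk}\,d\mu(r)$. Diagonalization: $Q=U\operatorname{diag}(0,\lambda_2,\dots,\lambda_\kappa)U^{-1}$ with $0=\lambda_1>\lambda_2\ge\dots\ge\lambda_\kappa$, $U$ real with $UU^T=\operatorname{diag}(\boldsymbol\pi)^{-1}$ (equivalently $U^T\operatorname{diag}(\boldsymbol\pi)U=I$)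 and first column $\mathbf 1$. Define $\nu_{ijk}=\sum_{l}\pi_lU_{li}U_{lj}U_{lk}$. *)

theory Defs
  imports "HOL-Probability.Probability"
begin

text \<open>States are indexed by a finite linearly ordered type 'n (kappa = CARD('n));
  the ordering of 'n gives the indices 1,...,kappa; the first index is the least element.\<close>

definition first_idx :: "'n::{finite,linorder}" where
  "first_idx = (LEAST i. True)"

fun mpow :: "real^'n^'n \<Rightarrow> nat \<Rightarrow> real^'n^'n" where
  "mpow A 0 = mat 1"
| "mpow A (Suc n) = A ** mpow A n"

definition mexp :: "real^'n^'n \<Rightarrow> real^'n^'n" where
  "mexp A = (\<Sum>n. (1 / fact n) *\<^sub>R mpow A n)"

definition diagm :: "('n \<Rightarrow> real) \<Rightarrow> real^'n^'n" where
  "diagm d = (\<chi> i j. if i = j then d i else 0)"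

definition GTR :: "real^'n \<Rightarrow> real^'n^'n \<Rightarrow> bool" where
  "GTR \<pi> Q \<longleftrightarrow>
     (\<forall>i. \<pi> $ i > 0) \<and> (\<Sum>i\<in>UNIV. \<pi> $ i) = 1 \<and>
     (\<forall>i j. i \<noteq> j \<longrightarrow> Q $ i $ j > 0) \<and>
     (\<forall>i. (\<Sum>j\<in>UNIV. Q $ i $ j) = 0) \<and>
     (\<forall>i j. \<pi> $ i * Q $ i $ j = \<pi> $ j * Q $ j $ i) \<and>
     (\<Sum>i\<in>UNIV. \<pi> $ i * Q $ i $ i) = -1"

definition rate_dist :: "real measure \<Rightarrow> bool" where
  "rate_dist \<mu> \<longleftrightarrow> prob_space \<mu> \<and> sets \<mu> = sets borel \<and>
     (AE r in \<mu>. r \<ge> 0) \<and> integrable \<mu> (\<lambda>r. r) \<and> (\<integral>r. r \<partial>\<mu>) = 1"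

definition edges_ok :: "real \<Rightarrow> real \<Rightarrow> real \<Rightarrow> bool" where
  "edges_ok ta tb tc \<longleftrightarrow> ta \<ge> 0 \<and> tb \<ge> 0 \<and> tc \<ge> 0 \<and>
     ta + tb > 0 \<and> ta + tc > 0 \<and> tb + tc > 0"

definition jointP :: "real^'n \<Rightarrow> real^'n^'n \<Rightarrow> real measure \<Rightarrow> real \<Rightarrow> real \<Rightarrow> real
    \<Rightarrow> 'n \<Rightarrow> 'n \<Rightarrow> 'n \<Rightarrow> real" where
  "jointP \<pi> Q \<mu> ta tb tc i j k =
     (\<integral>r. (\<Sum>h\<in>UNIV. \<pi> $ h * mexp ((ta * r) *\<^sub>R Q) $ h $ i
               * mexp ((tb * r) *\<^sub>R Q) $ h $ j * mexp ((tc * r) *\<^sub>R Q) $ h $ k) \<partial>\<mu>)"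

definition diagonalizes :: "(real, 'n::{finite,linorder}) vec \<Rightarrow> ((real, 'n) vec, 'n) vec \<Rightarrow> ((real, 'n) vec, 'n) vec
    \<Rightarrow> ('n \<Rightarrow> real) \<Rightarrow> bool" where
  "diagonalizes \<pi> Q U lam \<longleftrightarrow>
     Q = U ** diagm lam ** matrix_inv U \<and>
     lam first_idx = 0 \<and> (\<forall>i. i \<noteq> first_idx \<longrightarrow> lam i < 0) \<and>
     (\<forall>i j. i \<le> j \<longrightarrow> lam j \<le> lam i) \<and>
     U ** transpose U = diagm (\<lambda>i. inverse (\<pi> $ i)) \<and>
     (\<forall>l. U $ l $ first_idx = 1)"

definition nu :: "real^'n \<Rightarrow> real^'n^'n \<Rightarrow> 'n \<Rightarrow> 'n \<Rightarrow> 'n \<Rightarrow> real" where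
  "nu \<pi> U i j k = (\<Sum>l\<in>UNIV. \<pi> $ l * U $ l $ i * U $ l $ j * U $ l $ k)"

definition Lap :: "real measure \<Rightarrow> real \<Rightarrow> real" where
  "Lap \<mu> u = (\<integral>r. exp (r * u) \<partial>\<mu>)"

end

theory Submission
  imports Defs
begin

(* The argument rests on the spectral expansion of the joint distribution.  If U diagonalizes Q
   with eigenvalues lam, then U^-1 = U^T diag(pi) and exp(s Q) = U diag(exp(s lam)) U^-1, so
     P(i,j,k) = pi_i pi_j pi_k  sum_{a,b,c} U_ia U_jb U_kc nu_abc L(lam_a t_a + lam_b t_b + lam_c t_c).
   (1) Summing out two taxa leaves pi_i.  (2) Summing out one taxon leaves the symmetric matrix
   U diag(L(lam (t_a+t_b))) U^T.  Since L is strictly increasing on (-inf,0] and the eigenvalues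
   are sorted, two such decompositions of the same matrix have the same eigenvalue sequences and
   the "overlap" matrix between the two eigenbases only connects equal eigenvalues; hence every U
   diagonalizing Q also diagonalizes Q'.  (3) With a common U the two 3-way expansions differ by a
   tensor that the invertible U maps to zero, so the coefficients nu_abc L(...) agree.
   Existence of a diagonalization (needed to start the argument) is the spectral theorem for the
   symmetric matrix diag(sqrt pi) Q diag(sqrt pi)^-1, proved by successively maximizing its
   Rayleigh quotient, which also yields the eigenvalues in decreasing order. *)

section \<open>Matrix algebra\<close>

lemma mat_mult_entry: "(A ** B) $ i $ j = (\<Sum>k\<in>UNIV. A $ i $ k * B $ k $ j)"
  for A B :: "real^'n^'n"
  by (simp add: matrix_matrix_mult_def)

lemma diagm_entry: "diagm d $ i $ j = (if i = j then d i else 0)"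
  by (simp add: diagm_def)

lemma mult_diagm_entry: "(A ** diagm d) $ i $ j = A $ i $ j * d j" for A :: "real^'n^'n"
  by (simp add: mat_mult_entry diagm_entry if_distrib cong: if_cong)

lemma diagm_mult_entry: "(diagm d ** A) $ i $ j = d i * A $ i $ j" for A :: "real^'n^'n"
  by (simp add: mat_mult_entry diagm_entry if_distrib[of "\<lambda>x. x * _"] cong: if_cong)

lemma diagm_mult_diagm: "diagm d ** diagm e = diagm (\<lambda>i. d i * e i)"
  by (simp add: vec_eq_iff diagm_mult_entry diagm_entry)

lemma diagm_one: "diagm (\<lambda>i. 1) = mat 1"
  by (simp add: vec_eq_iff diagm_entry mat_def)

lemma intertwines_diagm_iff:
  "W ** diagm g = diagm g' ** W \<longleftrightarrow> (\<forall>a b. W $ a $ b * g b = g' a * W $ a $ b)"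
  for W :: "real^'n^'n"
  by (simp add: vec_eq_iff mult_diagm_entry diagm_mult_entry)

lemma conj_diagm_entry: "(U ** diagm d ** V) $ h $ i = (\<Sum>a\<in>UNIV. U $ h $ a * d a * V $ a $ i)"
  for U V :: "real^'n^'n"
  by (simp add: mat_mult_entry[of "U ** diagm d" V] mult_diagm_entry)

lemma mpow_conj_diagm:
  fixes U V :: "real^'n^'n"
  assumes "V ** U = mat 1" "U ** V = mat 1"
  shows "mpow (U ** diagm d ** V) n = U ** diagm (\<lambda>i. d i ^ n) ** V"
proof (induction n)
  case 0
  show ?case by (simp add: diagm_one assms)
next
  case (Suc n)
  have "mpow (U ** diagm d ** V) (Suc n) = (U ** diagm d ** V) ** (U ** diagm (\<lambda>i. d i ^ n) ** V)"
    using Suc by simp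
  also have "\<dots> = U ** diagm d ** (V ** U) ** diagm (\<lambda>i. d i ^ n) ** V"
    by (simp add: matrix_mul_assoc)
  also have "\<dots> = U ** diagm (\<lambda>i. d i ^ Suc n) ** V"
    by (simp add: assms matrix_mul_assoc) (metis diagm_mult_diagm matrix_mul_assoc)
  finally show ?case .
qed

lemma mexp_conj_diagm:
  fixes U V :: "real^'n^'n"
  assumes "V ** U = mat 1" "U ** V = mat 1"
  shows "mexp (U ** diagm d ** V) = U ** diagm (\<lambda>i. exp (d i)) ** V"
proof -
  define F where "F n = (1 / fact n) *\<^sub>R (U ** diagm (\<lambda>i. d i ^ n) ** V)" for n
  have F_entry: "F n $ h $ i = (\<Sum>a\<in>UNIV. U $ h $ a * (d a ^ n /\<^sub>R fact n) * V $ a $ i)" for n h i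
    unfolding F_def by (simp add: conj_diagm_entry sum_distrib_left field_simps)
  have "F sums (U ** diagm (\<lambda>i. exp (d i)) ** V)"
    unfolding sums_def
  proof (rule vec_tendstoI, rule vec_tendstoI)
    fix h i
    have "(\<lambda>n. \<Sum>a\<in>UNIV. U $ h $ a * (d a ^ n /\<^sub>R fact n) * V $ a $ i) sums
          (\<Sum>a\<in>UNIV. U $ h $ a * exp (d a) * V $ a $ i)"
      by (intro sums_sum sums_mult sums_mult2 exp_converges)
    then show "(\<lambda>N. (\<Sum>n<N. F n) $ h $ i) \<longlonglongrightarrow> (U ** diagm (\<lambda>i. exp (d i)) ** V) $ h $ i"
      unfolding sums_def conj_diagm_entry by (simp add: F_entry)
  qed
  moreover have "mexp (U ** diagm d ** V) = suminf F"
    unfolding mexp_def F_def using mpow_conj_diagm[OF assms] by simp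
  ultimately show ?thesis using sums_unique by metis
qed

text \<open>The inverse of a matrix U with U U^T = diag(1/pi) is U^T diag(pi).\<close>
definition pi_adjoint :: "real^'n \<Rightarrow> real^'n^'n \<Rightarrow> real^'n^'n" where
  "pi_adjoint \<pi> U = (\<chi> a i. U $ i $ a * \<pi> $ i)"

lemma pi_adjoint_inverse:
  fixes U :: "real^'n^'n"
  assumes UUt: "U ** transpose U = diagm (\<lambda>i. inverse (\<pi> $ i))" and pos: "\<And>i. \<pi> $ i > 0"
  shows "U ** pi_adjoint \<pi> U = mat 1" "pi_adjoint \<pi> U ** U = mat 1"
    "matrix_inv U = pi_adjoint \<pi> U"
proof -
  have "(U ** pi_adjoint \<pi> U) $ l $ m = (U ** transpose U) $ l $ m * \<pi> $ m" for l m
    by (simp add: mat_mult_entry pi_adjoint_def transpose_def sum_distrib_right mult.assoc)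
  then have "(U ** pi_adjoint \<pi> U) $ l $ m = (if l = m then 1 else 0)" for l m
    using pos[of m] by (simp add: UUt diagm_entry)
  then show UV: "U ** pi_adjoint \<pi> U = mat 1" by (simp add: vec_eq_iff mat_def)
  then show VU: "pi_adjoint \<pi> U ** U = mat 1" using matrix_left_right_inverse by blast
  have "U ** matrix_inv U = mat 1 \<and> matrix_inv U ** U = mat 1"
    unfolding matrix_inv_def by (rule someI[of _ "pi_adjoint \<pi> U"]) (use UV VU in blast)
  then show "matrix_inv U = pi_adjoint \<pi> U"
    by (metis VU matrix_mul_assoc matrix_mul_lid matrix_mul_rid)
qed

lemma diagonalizes_first:
  assumes "diagonalizes \<pi> Q U lam"
  shows "U $ l $ first_idx = 1" "lam first_idx = 0"
  using assms unfolding diagonalizes_def by auto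

lemma diagonalizes_antitone:
  assumes "diagonalizes \<pi> Q U lam" "a \<le> b"
  shows "lam b \<le> lam a"
  using assms unfolding diagonalizes_def by blast

lemma diagonalizes_nonpos:
  assumes "diagonalizes \<pi> Q U lam"
  shows "lam a \<le> 0"
  using assms unfolding diagonalizes_def by (cases "a = first_idx") force+

lemma diagonalizes_rows:
  assumes "diagonalizes \<pi> Q U lam"
  shows "(\<Sum>a\<in>UNIV. U $ i $ a * U $ j $ a) = (if i = j then inverse (\<pi> $ i) else 0)"
proof -
  have "U ** transpose U = diagm (\<lambda>i. inverse (\<pi> $ i))"
    using assms unfolding diagonalizes_def by blast
  from arg_cong[OF this, of "\<lambda>M. M $ i $ j"] show ?thesis
    by (simp add: mat_mult_entry transpose_def diagm_entry)
qed

lemma diagonalizes_inverse: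
  assumes D: "diagonalizes \<pi> Q U lam" and pos: "\<And>i. \<pi> $ i > 0"
  shows "U ** pi_adjoint \<pi> U = mat 1" "pi_adjoint \<pi> U ** U = mat 1"
    "Q = U ** diagm lam ** pi_adjoint \<pi> U" "matrix_inv U = pi_adjoint \<pi> U"
proof -
  have UUt: "U ** transpose U = diagm (\<lambda>i. inverse (\<pi> $ i))"
    using D unfolding diagonalizes_def by blast
  note inv = pi_adjoint_inverse[OF UUt pos]
  show "U ** pi_adjoint \<pi> U = mat 1" "pi_adjoint \<pi> U ** U = mat 1" using inv(1,2) .
  show "matrix_inv U = pi_adjoint \<pi> U" using inv(3) .
  then show "Q = U ** diagm lam ** pi_adjoint \<pi> U" using D unfolding diagonalizes_def by simp
qed

lemma diagonalizes_orthonormal: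
  assumes D: "diagonalizes \<pi> Q U lam" and pos: "\<And>i. \<pi> $ i > 0"
  shows "(\<Sum>i\<in>UNIV. \<pi> $ i * U $ i $ a * U $ i $ b) = (if a = b then 1 else 0)"
  using arg_cong[OF diagonalizes_inverse(2)[OF D pos], of "\<lambda>M. M $ a $ b"]
  by (simp add: mat_mult_entry pi_adjoint_def mat_def mult.commute mult.left_commute)

lemma diagonalizes_column_sum:
  assumes D: "diagonalizes \<pi> Q U lam" and pos: "\<And>i. \<pi> $ i > 0"
  shows "(\<Sum>k\<in>UNIV. \<pi> $ k * U $ k $ c) = (if c = first_idx then 1 else 0)"
  using diagonalizes_orthonormal[OF D pos, of c first_idx]
  by (simp add: diagonalizes_first[OF D] eq_commute)

lemma orthonormal_cancel:
  fixes U :: "((real, 'n::finite) vec, 'n) vec"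
  assumes orth: "\<And>a b. (\<Sum>i\<in>UNIV. \<pi> $ i * U $ i $ a * U $ i $ b) = (if a = b then 1 else 0)"
    and zero: "\<And>i. (\<Sum>a\<in>UNIV. U $ i $ a * y a) = 0"
  shows "y a' = 0"
proof -
  have "y a' = (\<Sum>a\<in>UNIV. (\<Sum>i\<in>UNIV. \<pi> $ i * U $ i $ a' * U $ i $ a) * y a)"
    by (simp add: orth if_distrib[of "\<lambda>x. x * _"] cong: if_cong)
  also have "\<dots> = (\<Sum>i\<in>UNIV. \<pi> $ i * U $ i $ a' * (\<Sum>a\<in>UNIV. U $ i $ a * y a))"
    by (simp add: sum_distrib_left sum_distrib_right mult_ac) (rule sum.swap)
  also have "\<dots> = 0" by (simp add: zero)
  finally show ?thesis .
qed

lemma orthonormal_cancel_tensor: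
  fixes U :: "((real, 'n::finite) vec, 'n) vec"
  assumes orth: "\<And>a b. (\<Sum>i\<in>UNIV. \<pi> $ i * U $ i $ a * U $ i $ b) = (if a = b then 1 else 0)"
    and zero: "\<And>i j k. (\<Sum>a\<in>UNIV. \<Sum>b\<in>UNIV. \<Sum>c\<in>UNIV. U $ i $ a * U $ j $ b * U $ k $ c * X a b c) = 0"
  shows "X a b c = 0"
proof -
  have zero_a: "(\<Sum>b\<in>UNIV. \<Sum>c\<in>UNIV. U $ j $ b * U $ k $ c * X a b c) = 0" for j k a
    by (rule orthonormal_cancel[OF orth, of "\<lambda>a. \<Sum>b\<in>UNIV. \<Sum>c\<in>UNIV. U $ j $ b * U $ k $ c * X a b c"])
       (use zero in \<open>simp add: sum_distrib_left mult_ac\<close>)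
  have zero_ab: "(\<Sum>c\<in>UNIV. U $ k $ c * X a b c) = 0" for k a b
    by (rule orthonormal_cancel[OF orth, of "\<lambda>b. \<Sum>c\<in>UNIV. U $ k $ c * X a b c"])
       (use zero_a in \<open>simp add: sum_distrib_left mult_ac\<close>)
  show ?thesis
    by (rule orthonormal_cancel[OF orth, of "\<lambda>c. X a b c"]) (use zero_ab in simp)
qed

section \<open>The Laplace transform of the rate distribution\<close>

lemma rate_measurable: "rate_dist \<mu> \<Longrightarrow> measurable \<mu> borel = measurable borel borel"
  unfolding rate_dist_def by (intro measurable_cong_sets) auto

lemma rate_nonneg_AE: "rate_dist \<mu> \<Longrightarrow> AE r in \<mu>. r \<ge> 0"
  unfolding rate_dist_def by blast

lemma integrable_exp_rate:
  assumes R: "rate_dist \<mu>" and u: "u \<le> 0"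
  shows "integrable \<mu> (\<lambda>r. exp (r * u))"
proof -
  interpret prob_space \<mu> using R unfolding rate_dist_def by blast
  have "(\<lambda>r. exp (r * u)) \<in> borel_measurable \<mu>"
    unfolding rate_measurable[OF R] by measurable
  moreover have "AE r in \<mu>. norm (exp (r * u)) \<le> 1"
    using rate_nonneg_AE[OF R] by (auto elim!: eventually_mono simp: mult_nonneg_nonpos u)
  ultimately show ?thesis by (intro integrable_const_bound)
qed

lemma Lap_0: "rate_dist \<mu> \<Longrightarrow> Lap \<mu> 0 = 1"
  unfolding Lap_def rate_dist_def by (simp add: prob_space.prob_space)

text \<open>L is strictly increasing on (-inf,0], since the rates are not almost surely 0 (mean 1).\<close>
lemma Lap_strict_mono:
  assumes R: "rate_dist \<mu>" and uv: "u < v" and v: "v \<le> 0"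
  shows "Lap \<mu> u < Lap \<mu> v"
proof -
  define f where "f r = exp (r * v) - exp (r * u)" for r
  have Iu: "integrable \<mu> (\<lambda>r. exp (r * u))" "integrable \<mu> (\<lambda>r. exp (r * v))"
    using integrable_exp_rate[OF R] uv v by auto
  then have If: "integrable \<mu> f" unfolding f_def by auto
  have f_nonneg: "AE r in \<mu>. 0 \<le> f r"
    using rate_nonneg_AE[OF R]
  proof (rule eventually_mono)
    fix r :: real assume "r \<ge> 0"
    then have "r * u \<le> r * v" using uv by (intro mult_left_mono) auto
    then show "0 \<le> f r" by (simp add: f_def)
  qed
  have diff: "integral\<^sup>L \<mu> f = Lap \<mu> v - Lap \<mu> u"
    unfolding f_def Lap_def using Iu by simp
  have "integral\<^sup>L \<mu> f \<noteq> 0"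
  proof
    assume "integral\<^sup>L \<mu> f = 0"
    then have "AE r in \<mu>. f r = 0" using integral_nonneg_eq_0_iff_AE[OF If f_nonneg] by simp
    then have "AE r in \<mu>. r = 0"
      by (rule eventually_mono) (use uv in \<open>simp add: f_def\<close>)
    then have "(\<integral>r. r \<partial>\<mu>) = (\<integral>r. 0 \<partial>\<mu>)"
      by (intro integral_cong_AE) (simp_all add: rate_measurable[OF R])
    then show False using R unfolding rate_dist_def by simp
  qed
  moreover have "integral\<^sup>L \<mu> f \<ge> 0" using f_nonneg by (rule integral_nonneg_AE)
  ultimately show ?thesis using diff by simp
qed

lemma Lap_mono:
  assumes "rate_dist \<mu>" "u \<le> v" "v \<le> 0"
  shows "Lap \<mu> u \<le> Lap \<mu> v"
  using Lap_strict_mono[OF assms(1) _ assms(3), of u] assms(2) by (cases "u = v") (auto intro: less_imp_le)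

lemma Lap_inj:
  assumes R: "rate_dist \<mu>" and "x \<le> 0" "y \<le> 0" "Lap \<mu> x = Lap \<mu> y"
  shows "x = y"
  using Lap_strict_mono[OF R, of x y] Lap_strict_mono[OF R, of y x] assms
  by (cases x y rule: linorder_cases) auto

section \<open>Spectral expansion of the joint distribution\<close>

lemma diagonalizes_mexp_entry:
  assumes D: "diagonalizes \<pi> Q U lam" and pos: "\<And>i. \<pi> $ i > 0"
  shows "mexp (s *\<^sub>R Q) $ h $ i = (\<Sum>a\<in>UNIV. U $ h $ a * exp (s * lam a) * (U $ i $ a * \<pi> $ i))"
proof -
  note inv = diagonalizes_inverse[OF D pos]
  have "s *\<^sub>R Q = U ** diagm (\<lambda>a. s * lam a) ** pi_adjoint \<pi> U"
    by (subst inv(3)) (simp add: vec_eq_iff conj_diagm_entry sum_distrib_left mult_ac)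
  then have "mexp (s *\<^sub>R Q) = U ** diagm (\<lambda>a. exp (s * lam a)) ** pi_adjoint \<pi> U"
    using mexp_conj_diagm[OF inv(2) inv(1)] by simp
  then show ?thesis by (simp add: conj_diagm_entry pi_adjoint_def)
qed

lemma sum_product3:
  "(\<Sum>a\<in>A. f a) * (\<Sum>b\<in>B. g b) * (\<Sum>c\<in>C. h c) = (\<Sum>a\<in>A. \<Sum>b\<in>B. \<Sum>c\<in>C. f a * g b * h c)"
  for f g h :: "'a \<Rightarrow> real"
proof -
  have "(\<Sum>b\<in>B. g b) * (\<Sum>c\<in>C. h c) = (\<Sum>b\<in>B. \<Sum>c\<in>C. g b * h c)"
    by (rule sum_product)
  then have "(\<Sum>a\<in>A. f a) * (\<Sum>b\<in>B. g b) * (\<Sum>c\<in>C. h c) = (\<Sum>a\<in>A. f a * (\<Sum>b\<in>B. \<Sum>c\<in>C. g b * h c))"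
    by (simp add: mult.assoc sum_distrib_right)
  also have "\<dots> = (\<Sum>a\<in>A. \<Sum>b\<in>B. \<Sum>c\<in>C. f a * g b * h c)"
    by (simp add: sum_distrib_left mult.assoc)
  finally show ?thesis .
qed

lemma integral_sum3:
  fixes f :: "_ \<Rightarrow> _ \<Rightarrow> _ \<Rightarrow> _ \<Rightarrow> real"
  assumes "\<And>a b c. integrable M (f a b c)"
  shows "(\<integral>x. (\<Sum>a\<in>A. \<Sum>b\<in>B. \<Sum>c\<in>C. f a b c x) \<partial>M) = (\<Sum>a\<in>A. \<Sum>b\<in>B. \<Sum>c\<in>C. \<integral>x. f a b c x \<partial>M)"
  by (simp add: Bochner_Integration.integral_sum integrable_sum assms)

lemma sum_swap_outer3:
  "(\<Sum>h\<in>H. \<Sum>a\<in>A. \<Sum>b\<in>B. \<Sum>c\<in>C. f h a b c) = (\<Sum>a\<in>A. \<Sum>b\<in>B. \<Sum>c\<in>C. \<Sum>h\<in>H. f h a b c)"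
  by (subst sum.swap, rule sum.cong[OF refl], subst sum.swap, rule sum.cong[OF refl], rule sum.swap)

lemma jointP_integrand_expansion:
  assumes D: "diagonalizes \<pi> Q U lam" and pos: "\<And>i. \<pi> $ i > 0"
  shows "(\<Sum>h\<in>UNIV. \<pi> $ h * mexp ((ta * r) *\<^sub>R Q) $ h $ i
               * mexp ((tb * r) *\<^sub>R Q) $ h $ j * mexp ((tc * r) *\<^sub>R Q) $ h $ k)
    = (\<Sum>a\<in>UNIV. \<Sum>b\<in>UNIV. \<Sum>c\<in>UNIV.
         (\<pi> $ i * \<pi> $ j * \<pi> $ k * (U $ i $ a * U $ j $ b * U $ k $ c * nu \<pi> U a b c))
         * exp (r * (lam a * ta + lam b * tb + lam c * tc)))"
proof -
  let ?X = "\<lambda>h a b c. (U $ h $ a * exp (ta * r * lam a) * (U $ i $ a * \<pi> $ i)) *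
     (U $ h $ b * exp (tb * r * lam b) * (U $ j $ b * \<pi> $ j)) *
     (U $ h $ c * exp (tc * r * lam c) * (U $ k $ c * \<pi> $ k))"
  have "(\<Sum>h\<in>UNIV. \<pi> $ h * mexp ((ta * r) *\<^sub>R Q) $ h $ i
               * mexp ((tb * r) *\<^sub>R Q) $ h $ j * mexp ((tc * r) *\<^sub>R Q) $ h $ k)
     = (\<Sum>h\<in>UNIV. \<pi> $ h * (\<Sum>a\<in>UNIV. \<Sum>b\<in>UNIV. \<Sum>c\<in>UNIV. ?X h a b c))"
    unfolding diagonalizes_mexp_entry[OF D pos]
    by (intro sum.cong refl) (subst sum_product3[symmetric], simp only: mult.assoc)
  also have "\<dots> = (\<Sum>h\<in>UNIV. \<Sum>a\<in>UNIV. \<Sum>b\<in>UNIV. \<Sum>c\<in>UNIV. \<pi> $ h * ?X h a b c)"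
    by (simp add: sum_distrib_left)
  also have "\<dots> = (\<Sum>a\<in>UNIV. \<Sum>b\<in>UNIV. \<Sum>c\<in>UNIV. \<Sum>h\<in>UNIV. \<pi> $ h * ?X h a b c)"
    by (rule sum_swap_outer3)
  also have "\<dots> = (\<Sum>a\<in>UNIV. \<Sum>b\<in>UNIV. \<Sum>c\<in>UNIV.
         (\<pi> $ i * \<pi> $ j * \<pi> $ k * (U $ i $ a * U $ j $ b * U $ k $ c * nu \<pi> U a b c))
         * exp (r * (lam a * ta + lam b * tb + lam c * tc)))"
  proof (intro sum.cong refl)
    fix a b c
    have "exp (ta * r * lam a) * exp (tb * r * lam b) * exp (tc * r * lam c)
        = exp (r * (lam a * ta + lam b * tb + lam c * tc))"
      by (simp add: exp_add[symmetric] algebra_simps)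
    then show "(\<Sum>h\<in>UNIV. \<pi> $ h * ?X h a b c) =
         (\<pi> $ i * \<pi> $ j * \<pi> $ k * (U $ i $ a * U $ j $ b * U $ k $ c * nu \<pi> U a b c))
         * exp (r * (lam a * ta + lam b * tb + lam c * tc))"
      unfolding nu_def sum_distrib_left sum_distrib_right
      by (intro sum.cong refl) (simp add: mult_ac flip: \<open>_ = exp _\<close>)
  qed
  finally show ?thesis .
qed

lemma jointP_spectral_expansion:
  assumes D: "diagonalizes \<pi> Q U lam" and pos: "\<And>i. \<pi> $ i > 0" and R: "rate_dist \<mu>"
    and t: "ta \<ge> 0" "tb \<ge> 0" "tc \<ge> 0"
  shows "jointP \<pi> Q \<mu> ta tb tc i j k = (\<Sum>a\<in>UNIV. \<Sum>b\<in>UNIV. \<Sum>c\<in>UNIV.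
         (\<pi> $ i * \<pi> $ j * \<pi> $ k * (U $ i $ a * U $ j $ b * U $ k $ c * nu \<pi> U a b c))
         * Lap \<mu> (lam a * ta + lam b * tb + lam c * tc))"
proof -
  have "lam a * ta + lam b * tb + lam c * tc \<le> 0" for a b c
    using diagonalizes_nonpos[OF D] t by (simp add: add_nonpos_nonpos mult_nonpos_nonneg)
  then have "integrable \<mu> (\<lambda>r. C a b c * exp (r * (lam a * ta + lam b * tb + lam c * tc)))"
    for a b c and C :: "_ \<Rightarrow> _ \<Rightarrow> _ \<Rightarrow> real"
    using integrable_exp_rate[OF R] by simp
  then show ?thesis
    unfolding jointP_def jointP_integrand_expansion[OF D pos] Lap_def
    by (subst integral_sum3) simp_all
qed

lemma jointP_pair_marginal:
  assumes D: "diagonalizes \<pi> Q U lam" and pos: "\<And>i. \<pi> $ i > 0" and R: "rate_dist \<mu>"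
    and t: "ta \<ge> 0" "tb \<ge> 0" "tc \<ge> 0"
  shows "(\<Sum>k\<in>UNIV. jointP \<pi> Q \<mu> ta tb tc i j k)
     = \<pi> $ i * \<pi> $ j * (U ** diagm (\<lambda>a. Lap \<mu> (lam a * (ta + tb))) ** transpose U) $ i $ j"
proof -
  have nu_first: "nu \<pi> U a b first_idx = (if a = b then 1 else 0)" for a b
    using diagonalizes_orthonormal[OF D pos, of a b] by (simp add: nu_def diagonalizes_first[OF D])
  let ?C = "\<lambda>a b c. \<pi> $ i * \<pi> $ j * (U $ i $ a * U $ j $ b * nu \<pi> U a b c)
         * Lap \<mu> (lam a * ta + lam b * tb + lam c * tc)"
  have "(\<Sum>k\<in>UNIV. jointP \<pi> Q \<mu> ta tb tc i j k)
     = (\<Sum>k\<in>UNIV. \<Sum>a\<in>UNIV. \<Sum>b\<in>UNIV. \<Sum>c\<in>UNIV. ?C a b c * (\<pi> $ k * U $ k $ c))"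
    unfolding jointP_spectral_expansion[OF D pos R t]
    by (intro sum.cong refl) (simp add: mult_ac)
  also have "\<dots> = (\<Sum>a\<in>UNIV. \<Sum>b\<in>UNIV. \<Sum>c\<in>UNIV. \<Sum>k\<in>UNIV. ?C a b c * (\<pi> $ k * U $ k $ c))"
    by (rule sum_swap_outer3)
  also have "\<dots> = (\<Sum>a\<in>UNIV. \<Sum>b\<in>UNIV. ?C a b first_idx)"
    by (simp add: sum_distrib_left[symmetric] diagonalizes_column_sum[OF D pos]
        if_distrib[of "\<lambda>x. _ * x"] cong: if_cong)
  also have "\<dots> = (\<Sum>a\<in>UNIV. ?C a a first_idx)"
    by (simp add: nu_first if_distrib[of "\<lambda>x. _ * x"] if_distrib[of "\<lambda>x. x * _"] cong: if_cong)
  also have "\<dots> = \<pi> $ i * \<pi> $ j * (U ** diagm (\<lambda>a. Lap \<mu> (lam a * (ta + tb))) ** transpose U) $ i $ j"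
    by (simp add: nu_first diagonalizes_first[OF D] conj_diagm_entry transpose_def
        sum_distrib_left distrib_left mult_ac)
  finally show ?thesis .
qed

lemma jointP_single_marginal:
  assumes D: "diagonalizes \<pi> Q U lam" and pos: "\<And>i. \<pi> $ i > 0" and R: "rate_dist \<mu>"
    and t: "ta \<ge> 0" "tb \<ge> 0" "tc \<ge> 0"
  shows "(\<Sum>j\<in>UNIV. \<Sum>k\<in>UNIV. jointP \<pi> Q \<mu> ta tb tc i j k) = \<pi> $ i"
proof -
  have "(\<Sum>j\<in>UNIV. \<Sum>k\<in>UNIV. jointP \<pi> Q \<mu> ta tb tc i j k)
    = (\<Sum>j\<in>UNIV. \<Sum>a\<in>UNIV. \<pi> $ i * U $ i $ a * Lap \<mu> (lam a * (ta + tb)) * (\<pi> $ j * U $ j $ a))"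
    unfolding jointP_pair_marginal[OF D pos R t]
    by (simp add: conj_diagm_entry transpose_def sum_distrib_left mult_ac)
  also have "\<dots> = (\<Sum>a\<in>UNIV. \<pi> $ i * U $ i $ a * Lap \<mu> (lam a * (ta + tb)) * (\<Sum>j\<in>UNIV. \<pi> $ j * U $ j $ a))"
    by (subst sum.swap) (simp add: sum_distrib_left)
  also have "\<dots> = \<pi> $ i"
    by (simp add: diagonalizes_column_sum[OF D pos] if_distrib[of "\<lambda>x. _ * x"]
        diagonalizes_first[OF D] Lap_0[OF R] cong: if_cong)
  finally show ?thesis .
qed

lemma jointP_swap_bc: "jointP \<pi> Q \<mu> ta tb tc i j k = jointP \<pi> Q \<mu> ta tc tb i k j"
  unfolding jointP_def by (simp add: mult_ac)

lemma jointP_rotate: "jointP \<pi> Q \<mu> ta tb tc i j k = jointP \<pi> Q \<mu> tb tc ta j k i"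
  unfolding jointP_def by (simp add: mult_ac)

lemma pair_matrix_eq:
  assumes D: "diagonalizes \<pi> Q U lam" and D': "diagonalizes \<pi> Q' U' lam'"
    and pos: "\<And>i. \<pi> $ i > 0" and R: "rate_dist \<mu>" and R': "rate_dist \<mu>'"
    and t: "ta \<ge> 0" "tb \<ge> 0" "tc \<ge> 0" and t': "ta' \<ge> 0" "tb' \<ge> 0" "tc' \<ge> 0"
    and sameP: "\<And>i j k. jointP \<pi> Q \<mu> ta tb tc i j k = jointP \<pi> Q' \<mu>' ta' tb' tc' i j k"
  shows "U ** diagm (\<lambda>a. Lap \<mu> (lam a * (ta + tb))) ** transpose U
       = U' ** diagm (\<lambda>a. Lap \<mu>' (lam' a * (ta' + tb'))) ** transpose U'"
proof -
  have "\<pi> $ i * \<pi> $ j * (U ** diagm (\<lambda>a. Lap \<mu> (lam a * (ta + tb))) ** transpose U) $ i $ j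
     = \<pi> $ i * \<pi> $ j * (U' ** diagm (\<lambda>a. Lap \<mu>' (lam' a * (ta' + tb'))) ** transpose U') $ i $ j" for i j
    unfolding jointP_pair_marginal[OF D pos R t, symmetric]
      jointP_pair_marginal[OF D' pos R' t', symmetric] sameP ..
  moreover have "\<pi> $ i * \<pi> $ j \<noteq> 0" for i j using pos[of i] pos[of j] by simp
  ultimately show ?thesis by (simp add: vec_eq_iff)
qed

section \<open>Uniqueness of sorted spectral decompositions\<close>

lemma downsets_eq:
  fixes S T :: "'n::{finite,linorder} set"
  assumes S: "\<And>x y. x \<in> S \<Longrightarrow> y \<le> x \<Longrightarrow> y \<in> S"
    and T: "\<And>x y. x \<in> T \<Longrightarrow> y \<le> x \<Longrightarrow> y \<in> T"
    and card: "card S = card T"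
  shows "S = T"
proof -
  have "S \<subseteq> T \<or> T \<subseteq> S"
  proof (rule ccontr)
    assume "\<not> ?thesis"
    then obtain x y where "x \<in> S" "x \<notin> T" "y \<in> T" "y \<notin> S" by blast
    then show False using S[of x y] T[of y x] by (cases "y \<le> x") auto
  qed
  then show ?thesis using card card_subset_eq[of S T] card_subset_eq[of T S] by auto
qed

text \<open>If an orthogonal matrix W intertwines diag(g) and diag(g') with both g, g' antitone, then
  g = g': the multiplicity of each value is the same on both sides.\<close>
lemma orthogonal_intertwiner_eq:
  fixes g g' :: "'n::{finite,linorder} \<Rightarrow> real" and W :: "((real, 'n) vec, 'n) vec"
  assumes orth: "transpose W ** W = mat 1"
    and intertw: "W ** diagm g = diagm g' ** W"
    and anti: "\<And>a b. a \<le> b \<Longrightarrow> g b \<le> g a" and anti': "\<And>a b. a \<le> b \<Longrightarrow> g' b \<le> g' a"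
  shows "g = g'"
proof -
  have cols: "(\<Sum>a\<in>UNIV. W $ a $ b * W $ a $ b) = 1" for b
    using arg_cong[OF orth, of "\<lambda>M. M $ b $ b"] by (simp add: mat_mult_entry transpose_def mat_def)
  have orth_rows: "W ** transpose W = mat 1" using orth matrix_left_right_inverse by blast
  have rows: "(\<Sum>b\<in>UNIV. W $ a $ b * W $ a $ b) = 1" for a
    using arg_cong[OF orth_rows, of "\<lambda>M. M $ a $ a"] by (simp add: mat_mult_entry transpose_def mat_def)
  have link: "W $ a $ b * g b = g' a * W $ a $ b" for a b
    using intertw unfolding intertwines_diagm_iff by blast
  have count: "card {b. v \<le> g b} = card {a. v \<le> g' a}" for v
  proof -
    have "real (card {b. v \<le> g b}) = (\<Sum>b\<in>UNIV. of_bool (v \<le> g b) * (\<Sum>a\<in>UNIV. W $ a $ b * W $ a $ b))"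
      by (simp add: cols)
    also have "\<dots> = (\<Sum>b\<in>UNIV. \<Sum>a\<in>UNIV. of_bool (v \<le> g' a) * (W $ a $ b * W $ a $ b))"
      unfolding sum_distrib_left
    proof (intro sum.cong refl)
      fix a b
      show "of_bool (v \<le> g b) * (W $ a $ b * W $ a $ b) = of_bool (v \<le> g' a) * (W $ a $ b * W $ a $ b)"
        using link[of a b] by (cases "W $ a $ b = 0") auto
    qed
    also have "\<dots> = (\<Sum>a\<in>UNIV. of_bool (v \<le> g' a) * (\<Sum>b\<in>UNIV. W $ a $ b * W $ a $ b))"
      by (subst sum.swap) (simp add: sum_distrib_left)
    also have "\<dots> = real (card {a. v \<le> g' a})"
      by (simp add: rows)
    finally show ?thesis by linarith
  qed
  have level_sets: "{b. v \<le> g b} = {a. v \<le> g' a}" for v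
    by (rule downsets_eq) (use anti anti' count in \<open>auto intro: order_trans\<close>)
  show "g = g'"
  proof
    fix a
    have "g a \<le> g' a" using level_sets[of "g a"] by blast
    moreover have "g' a \<le> g a" using level_sets[of "g' a"] by blast
    ultimately show "g a = g' a" by simp
  qed
qed

lemma intertwines_diagm_comp_inj:
  fixes W :: "real^'n^'n"
  assumes comm: "W ** diagm (\<lambda>a. f (lam a)) = diagm (\<lambda>a. f (lam a)) ** W"
    and inj: "inj_on f (range lam)"
  shows "W ** diagm lam = diagm lam ** W"
  unfolding intertwines_diagm_iff
proof (intro allI)
  fix a b
  show "W $ a $ b * lam b = lam a * W $ a $ b"
  proof (cases "W $ a $ b = 0")
    case False
    have "W $ a $ b * f (lam b) = f (lam a) * W $ a $ b"
      using comm unfolding intertwines_diagm_iff by blast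
    then have "f (lam b) = f (lam a)" using False by (simp add: mult.commute)
    then have "lam b = lam a" using inj by (auto dest: inj_onD)
    then show ?thesis by simp
  qed simp
qed

text \<open>The overlap between two eigenbases: entry (a,b) is the pi-inner product of column a of U'
  with column b of U.\<close>
definition overlap :: "real^'n \<Rightarrow> real^'n^'n \<Rightarrow> real^'n^'n \<Rightarrow> real^'n^'n" where
  "overlap \<pi> U' U = pi_adjoint \<pi> U' ** U"

lemma overlap_entry: "overlap \<pi> U' U $ a $ b = (\<Sum>i\<in>UNIV. \<pi> $ i * U' $ i $ a * U $ i $ b)"
  unfolding overlap_def by (simp add: mat_mult_entry pi_adjoint_def mult_ac)

lemma sum_product_swap:
  "(\<Sum>a\<in>A. (\<Sum>i\<in>I. F a i) * (\<Sum>j\<in>J. G a j)) = (\<Sum>i\<in>I. \<Sum>j\<in>J. \<Sum>a\<in>A. F a i * G a j)"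
  for F G :: "_ \<Rightarrow> _ \<Rightarrow> real"
proof -
  have "(\<Sum>a\<in>A. (\<Sum>i\<in>I. F a i) * (\<Sum>j\<in>J. G a j)) = (\<Sum>a\<in>A. \<Sum>i\<in>I. \<Sum>j\<in>J. F a i * G a j)"
    by (simp add: sum_product)
  also have "\<dots> = (\<Sum>i\<in>I. \<Sum>a\<in>A. \<Sum>j\<in>J. F a i * G a j)" by (rule sum.swap)
  also have "\<dots> = (\<Sum>i\<in>I. \<Sum>j\<in>J. \<Sum>a\<in>A. F a i * G a j)"
    by (rule sum.cong[OF refl], rule sum.swap)
  finally show ?thesis .
qed

lemma overlap_orthogonal:
  assumes D: "diagonalizes \<pi> Q U lam" and D': "diagonalizes \<pi> Q' U' lam'"
    and pos: "\<And>i. \<pi> $ i > 0"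
  shows "transpose (overlap \<pi> U' U) ** overlap \<pi> U' U = mat 1"
proof -
  have "(\<Sum>a\<in>UNIV. overlap \<pi> U' U $ a $ b * overlap \<pi> U' U $ a $ c) = (if b = c then 1 else 0)" for b c
  proof -
    have "(\<Sum>a\<in>UNIV. overlap \<pi> U' U $ a $ b * overlap \<pi> U' U $ a $ c)
      = (\<Sum>i\<in>UNIV. \<Sum>j\<in>UNIV. \<Sum>a\<in>UNIV.
          (\<pi> $ i * U' $ i $ a * U $ i $ b) * (\<pi> $ j * U' $ j $ a * U $ j $ c))"
      unfolding overlap_entry by (rule sum_product_swap)
    also have "\<dots> = (\<Sum>i\<in>UNIV. \<Sum>j\<in>UNIV. \<pi> $ i * U $ i $ b * (\<pi> $ j * U $ j $ c) *
        (\<Sum>a\<in>UNIV. U' $ i $ a * U' $ j $ a))"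
      by (simp add: sum_distrib_left mult_ac)
    also have "\<dots> = (\<Sum>i\<in>UNIV. \<pi> $ i * U $ i $ b * U $ i $ c)"
      using pos by (simp add: diagonalizes_rows[OF D'] if_distrib[of "\<lambda>x. _ * x"] cong: if_cong)
        (simp add: field_simps less_imp_neq[OF pos, symmetric])
    finally show ?thesis using diagonalizes_orthonormal[OF D pos] by simp
  qed
  then show ?thesis by (simp add: vec_eq_iff mat_mult_entry transpose_def mat_def)
qed

lemma sum3_factor:
  "(\<Sum>i\<in>I. \<Sum>j\<in>J. \<Sum>c\<in>C. f i c * h j c * k c) = (\<Sum>c\<in>C. k c * (\<Sum>i\<in>I. f i c) * (\<Sum>j\<in>J. h j c))"
  for f h :: "_ \<Rightarrow> _ \<Rightarrow> real"
proof -
  have "(\<Sum>i\<in>I. \<Sum>j\<in>J. \<Sum>c\<in>C. f i c * h j c * k c) = (\<Sum>i\<in>I. \<Sum>c\<in>C. \<Sum>j\<in>J. f i c * h j c * k c)"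
    by (rule sum.cong[OF refl], rule sum.swap)
  also have "\<dots> = (\<Sum>c\<in>C. \<Sum>i\<in>I. \<Sum>j\<in>J. f i c * h j c * k c)"
    by (rule sum.swap)
  also have "\<dots> = (\<Sum>c\<in>C. k c * (\<Sum>i\<in>I. f i c) * (\<Sum>j\<in>J. h j c))"
    by (simp add: sum_distrib_left sum_distrib_right mult_ac)
  finally show ?thesis .
qed

lemma overlap_intertwines:
  assumes D: "diagonalizes \<pi> Q U lam" and D': "diagonalizes \<pi> Q' U' lam'"
    and pos: "\<And>i. \<pi> $ i > 0"
    and same: "U ** diagm g ** transpose U = U' ** diagm g' ** transpose U'"
  shows "overlap \<pi> U' U ** diagm g = diagm g' ** overlap \<pi> U' U"
  unfolding intertwines_diagm_iff
proof (intro allI)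
  fix a b
  note orth = diagonalizes_orthonormal[OF D pos] and orth' = diagonalizes_orthonormal[OF D' pos]
  have same_entry: "(\<Sum>c\<in>UNIV. U $ i $ c * U $ j $ c * g c) = (\<Sum>c\<in>UNIV. U' $ i $ c * U' $ j $ c * g' c)"
    for i j
    using arg_cong[OF same, of "\<lambda>M. M $ i $ j"] by (simp add: conj_diagm_entry transpose_def mult_ac)
  have "(\<Sum>i\<in>UNIV. \<Sum>j\<in>UNIV. \<pi> $ i * U' $ i $ a * (\<pi> $ j * U $ j $ b) *
           (\<Sum>c\<in>UNIV. U $ i $ c * U $ j $ c * g c))
      = (\<Sum>i\<in>UNIV. \<Sum>j\<in>UNIV. \<Sum>c\<in>UNIV. (\<pi> $ i * U' $ i $ a * U $ i $ c) *
           (\<pi> $ j * U $ j $ b * U $ j $ c) * g c)"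
    by (simp add: sum_distrib_left mult_ac)
  also have "\<dots> = overlap \<pi> U' U $ a $ b * g b"
    unfolding sum3_factor orth by (simp add: overlap_entry if_distrib[of "\<lambda>x. _ * x"] cong: if_cong)
  finally have lhs: "(\<Sum>i\<in>UNIV. \<Sum>j\<in>UNIV. \<pi> $ i * U' $ i $ a * (\<pi> $ j * U $ j $ b) *
           (\<Sum>c\<in>UNIV. U $ i $ c * U $ j $ c * g c)) = overlap \<pi> U' U $ a $ b * g b" .
  have "(\<Sum>i\<in>UNIV. \<Sum>j\<in>UNIV. \<pi> $ i * U' $ i $ a * (\<pi> $ j * U $ j $ b) *
           (\<Sum>c\<in>UNIV. U' $ i $ c * U' $ j $ c * g' c))
      = (\<Sum>i\<in>UNIV. \<Sum>j\<in>UNIV. \<Sum>c\<in>UNIV. (\<pi> $ i * U' $ i $ a * U' $ i $ c) *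
           (\<pi> $ j * U' $ j $ c * U $ j $ b) * g' c)"
    by (simp add: sum_distrib_left mult_ac)
  also have "\<dots> = g' a * overlap \<pi> U' U $ a $ b"
    unfolding sum3_factor orth'
    by (simp add: overlap_entry if_distrib[of "\<lambda>x. _ * x"] if_distrib[of "\<lambda>x. x * _"] cong: if_cong)
  finally have rhs: "(\<Sum>i\<in>UNIV. \<Sum>j\<in>UNIV. \<pi> $ i * U' $ i $ a * (\<pi> $ j * U $ j $ b) *
           (\<Sum>c\<in>UNIV. U' $ i $ c * U' $ j $ c * g' c)) = g' a * overlap \<pi> U' U $ a $ b" .
  show "overlap \<pi> U' U $ a $ b * g b = g' a * overlap \<pi> U' U $ a $ b"
    using lhs rhs by (simp only: same_entry)
qed

text \<open>If the overlap of U with a diagonalizer U' of Q' respects the eigenvalues of Q', then U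
  diagonalizes Q' too: U = U' W, and W commutes with diag(lam').\<close>
lemma diagonalizes_of_commuting_overlap:
  assumes D: "diagonalizes \<pi> Q U lam" and D': "diagonalizes \<pi> Q' U' lam'"
    and pos: "\<And>i. \<pi> $ i > 0"
    and comm: "overlap \<pi> U' U ** diagm lam' = diagm lam' ** overlap \<pi> U' U"
  shows "diagonalizes \<pi> Q' U lam'"
proof -
  define W where "W = overlap \<pi> U' U"
  note inv = diagonalizes_inverse[OF D pos] and inv' = diagonalizes_inverse[OF D' pos]
  have U_eq: "U' ** W = U" unfolding W_def overlap_def by (metis matrix_mul_assoc inv'(1) matrix_mul_lid)
  have "U ** diagm lam' ** pi_adjoint \<pi> U = U' ** W ** diagm lam' ** pi_adjoint \<pi> U" by (simp add: U_eq)
  also have "\<dots> = U' ** diagm lam' ** W ** pi_adjoint \<pi> U" by (metis matrix_mul_assoc comm[folded W_def])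
  also have "\<dots> = U' ** diagm lam' ** pi_adjoint \<pi> U' ** (U ** pi_adjoint \<pi> U)"
    unfolding W_def overlap_def by (simp add: matrix_mul_assoc)
  also have "\<dots> = Q'" by (simp add: inv(1) inv'(3))
  finally have "Q' = U ** diagm lam' ** matrix_inv U" by (simp add: inv(4))
  then show "diagonalizes \<pi> Q' U lam'"
    using D D' unfolding diagonalizes_def by (elim conjE) (intro conjI; assumption)
qed

lemma diagonalizer_transfer:
  assumes D: "diagonalizes \<pi> Q U lam" and D': "diagonalizes \<pi> Q' U' lam'"
    and pos: "\<And>i. \<pi> $ i > 0" and R: "rate_dist \<mu>" and R': "rate_dist \<mu>'"
    and t: "t > 0" and t': "t' > 0"
    and same: "U ** diagm (\<lambda>a. Lap \<mu> (lam a * t)) ** transpose U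
             = U' ** diagm (\<lambda>a. Lap \<mu>' (lam' a * t')) ** transpose U'"
  shows "Lap \<mu> (lam a * t) = Lap \<mu>' (lam' a * t')" "diagonalizes \<pi> Q' U lam'"
proof -
  define W where "W = overlap \<pi> U' U"
  have nonpos: "lam a * t \<le> 0" "lam' a * t' \<le> 0" for a
    using diagonalizes_nonpos[OF D] diagonalizes_nonpos[OF D'] t t'
    by (simp_all add: mult_nonpos_nonneg)
  have anti: "Lap \<mu> (lam b * t) \<le> Lap \<mu> (lam a * t)" if "a \<le> b" for a b
    using Lap_mono[OF R _ nonpos(1)] diagonalizes_antitone[OF D that] t by simp
  have anti': "Lap \<mu>' (lam' b * t') \<le> Lap \<mu>' (lam' a * t')" if "a \<le> b" for a b
    using Lap_mono[OF R' _ nonpos(2)] diagonalizes_antitone[OF D' that] t' by simp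
  note intertw = overlap_intertwines[OF D D' pos same, folded W_def]
  have transforms_eq: "(\<lambda>a. Lap \<mu> (lam a * t)) = (\<lambda>a. Lap \<mu>' (lam' a * t'))"
    by (rule orthogonal_intertwiner_eq[OF overlap_orthogonal[OF D D' pos, folded W_def] intertw
          anti anti'])
  then show "Lap \<mu> (lam a * t) = Lap \<mu>' (lam' a * t')" by metis
  have comm: "W ** diagm lam' = diagm lam' ** W"
  proof (rule intertwines_diagm_comp_inj[where f = "\<lambda>x. Lap \<mu>' (x * t')"])
    show "W ** diagm (\<lambda>a. Lap \<mu>' (lam' a * t')) = diagm (\<lambda>a. Lap \<mu>' (lam' a * t')) ** W"
      using intertw by (simp only: transforms_eq)
    show "inj_on (\<lambda>x. Lap \<mu>' (x * t')) (range lam')"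
    proof (rule inj_onI)
      fix x y assume "x \<in> range lam'" "y \<in> range lam'" "Lap \<mu>' (x * t') = Lap \<mu>' (y * t')"
      then have "x * t' = y * t'" using Lap_inj[OF R'] nonpos(2) by blast
      then show "x = y" using t' by simp
    qed
  qed
  then show "diagonalizes \<pi> Q' U lam'"
    unfolding W_def by (rule diagonalizes_of_commuting_overlap[OF D D' pos])
qed

section \<open>The sorted spectral theorem for symmetric matrices\<close>

lemma symmetric_inner_swap:
  fixes S :: "real^'n^'n"
  assumes "transpose S = S"
  shows "(S *v x) \<bullet> y = x \<bullet> (S *v y)"
  by (metis assms dot_lmul_matrix transpose_matrix_vector)

text \<open>If b t + A t^2 is never positive, then b = 0 (take t of the sign of b and small).\<close>
lemma nonpos_quadratic_linear_coeff:
  fixes b A :: real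
  assumes "\<And>t. b * t + A * t\<^sup>2 \<le> 0"
  shows "b = 0"
proof (rule ccontr)
  assume b: "b \<noteq> 0"
  define c where "c = 2 * (\<bar>A\<bar> + 1)"
  have c: "c > 0" "\<bar>A\<bar> < c / 2" unfolding c_def by auto
  define t where "t = b / c"
  have "b * t = b\<^sup>2 / c" unfolding t_def by (simp add: power2_eq_square)
  moreover have "A * t\<^sup>2 \<ge> - (\<bar>A\<bar> * t\<^sup>2)" by (simp add: abs_mult_pos)
  moreover have "\<bar>A\<bar> * t\<^sup>2 \<le> (c / 2) * t\<^sup>2" using c by (intro mult_right_mono) auto
  moreover have "(c / 2) * t\<^sup>2 = b\<^sup>2 / (2 * c)" unfolding t_def using c
    by (simp add: power2_eq_square field_simps)
  moreover have "b\<^sup>2 / c - b\<^sup>2 / (2 * c) > 0" using c b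
    by (simp add: field_simps)
  ultimately have "b * t + A * t\<^sup>2 > 0" by linarith
  then show False using assms[of t] by simp
qed

lemma rayleigh_bound_subspace:
  fixes S :: "real^'n^'n"
  assumes W: "subspace W" and yW: "y \<in> W"
    and bound: "\<And>z. z \<in> W \<Longrightarrow> norm z = 1 \<Longrightarrow> z \<bullet> (S *v z) \<le> m"
  shows "y \<bullet> (S *v y) \<le> m * (y \<bullet> y)"
proof (cases "y = 0")
  case False
  define z where "z = (1 / norm y) *\<^sub>R y"
  have "z \<in> W" "norm z = 1" unfolding z_def using subspace_scale[OF W yW] False by auto
  then have "z \<bullet> (S *v z) \<le> m" by (rule bound)
  moreover have "z \<bullet> (S *v z) = (y \<bullet> (S *v y)) / (norm y)\<^sup>2"
    unfolding z_def by (simp add: matrix_vector_mult_scaleR power2_eq_square)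
  moreover have "(norm y)\<^sup>2 = y \<bullet> y" by (simp add: power2_norm_eq_inner)
  moreover have "norm y > 0" using False by simp
  ultimately show ?thesis by (simp add: divide_le_eq mult.commute)
qed simp

text \<open>First variation: if u maximizes the quadratic form y.Sy - m y.y (value 0 at the unit vector
  u, with m = u.Su) on a subspace W, then S u - m u is orthogonal to W.\<close>
lemma rayleigh_first_variation:
  fixes S :: "real^'n^'n"
  assumes symS: "transpose S = S" and W: "subspace W" and uW: "u \<in> W" and uu: "u \<bullet> u = 1"
    and bound: "\<And>y. y \<in> W \<Longrightarrow> y \<bullet> (S *v y) \<le> (u \<bullet> (S *v u)) * (y \<bullet> y)"
    and wW: "w \<in> W"
  shows "w \<bullet> (S *v u - (u \<bullet> (S *v u)) *\<^sub>R u) = 0"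
proof -
  define m where "m = u \<bullet> (S *v u)"
  have "2 * (w \<bullet> (S *v u - m *\<^sub>R u)) * t + (w \<bullet> (S *v w) - m * (w \<bullet> w)) * t\<^sup>2 \<le> 0" for t
  proof -
    have yW: "u + t *\<^sub>R w \<in> W" using subspace_add[OF W uW subspace_scale[OF W wW]] .
    have swap: "u \<bullet> (S *v w) = w \<bullet> (S *v u)"
      by (metis symmetric_inner_swap[OF symS] inner_commute)
    have "(u + t *\<^sub>R w) \<bullet> (S *v (u + t *\<^sub>R w)) =
        m + 2 * t * (w \<bullet> (S *v u)) + t\<^sup>2 * (w \<bullet> (S *v w))"
      unfolding m_def matrix_vector_right_distrib matrix_vector_mult_scaleR inner_add_left
        inner_add_right inner_scaleR_left inner_scaleR_right swap
      by (simp add: power2_eq_square algebra_simps)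
    moreover have "(u + t *\<^sub>R w) \<bullet> (u + t *\<^sub>R w) = 1 + 2 * t * (w \<bullet> u) + t\<^sup>2 * (w \<bullet> w)"
      unfolding inner_add_left inner_add_right inner_scaleR_left inner_scaleR_right
        inner_commute[of u w] uu
      by (simp add: power2_eq_square algebra_simps)
    ultimately have "m + 2 * t * (w \<bullet> (S *v u)) + t\<^sup>2 * (w \<bullet> (S *v w))
        \<le> m * (1 + 2 * t * (w \<bullet> u) + t\<^sup>2 * (w \<bullet> w))"
      using bound[OF yW] unfolding m_def by simp
    then show ?thesis
      by (simp add: inner_diff_right algebra_simps power2_eq_square)
  qed
  then have "2 * (w \<bullet> (S *v u - m *\<^sub>R u)) = 0" by (rule nonpos_quadratic_linear_coeff)
  then show ?thesis unfolding m_def by simp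
qed

text \<open>Hence a maximizer u of the Rayleigh quotient of a symmetric S over the unit vectors of an
  S-invariant subspace W is an eigenvector: S u - (u.Su) u lies in W and is orthogonal to W.\<close>
lemma rayleigh_maximizer_eigenvector:
  fixes S :: "real^'n^'n"
  assumes symS: "transpose S = S" and W: "subspace W" and inv: "\<And>y. y \<in> W \<Longrightarrow> S *v y \<in> W"
    and uW: "u \<in> W" and un: "norm u = 1"
    and max: "\<And>y. y \<in> W \<Longrightarrow> norm y = 1 \<Longrightarrow> y \<bullet> (S *v y) \<le> u \<bullet> (S *v u)"
  shows "S *v u = (u \<bullet> (S *v u)) *\<^sub>R u"
proof -
  have uu: "u \<bullet> u = 1" using un by (simp add: norm_eq_1)
  have bound: "y \<bullet> (S *v y) \<le> (u \<bullet> (S *v u)) * (y \<bullet> y)" if "y \<in> W" for y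
    using rayleigh_bound_subspace[OF W that max] .
  have "S *v u - (u \<bullet> (S *v u)) *\<^sub>R u \<in> W"
    using subspace_diff[OF W inv[OF uW] subspace_scale[OF W uW]] .
  from rayleigh_first_variation[OF symS W uW uu bound this] show ?thesis by simp
qed

text \<open>Such a maximizer exists on any nonzero subspace, by compactness of its unit sphere.\<close>
lemma rayleigh_maximizer_exists:
  fixes S :: "real^'n^'n"
  assumes W: "subspace W" and y: "y \<in> W" "y \<noteq> 0"
  obtains u where "u \<in> W" "norm u = 1"
    "\<And>z. z \<in> W \<Longrightarrow> norm z = 1 \<Longrightarrow> z \<bullet> (S *v z) \<le> u \<bullet> (S *v u)"
proof -
  define K where "K = W \<inter> sphere 0 1"
  have "compact K" unfolding K_def using closed_subspace[OF W] compact_sphere by blast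
  moreover have "(1 / norm y) *\<^sub>R y \<in> K" unfolding K_def using subspace_scale[OF W y(1)] y(2) by simp
  moreover have "continuous_on K (\<lambda>z. z \<bullet> (S *v z))" by (intro continuous_intros)
  ultimately obtain u where "u \<in> K" "\<forall>z\<in>K. z \<bullet> (S *v z) \<le> u \<bullet> (S *v u)"
    using continuous_attains_sup[of K] by blast
  then show thesis using that[of u] unfolding K_def by auto
qed

lemma exists_orthogonal_nonzero:
  fixes v :: "nat \<Rightarrow> real^'n"
  assumes "k < CARD('n)"
  obtains y where "y \<noteq> 0" "\<And>b. b < k \<Longrightarrow> v b \<bullet> y = 0"
proof -
  have "span (v ` {..<k}) \<noteq> UNIV"
  proof
    assume "span (v ` {..<k}) = UNIV"
    then have "dim (UNIV :: (real^'n) set) \<le> card (v ` {..<k})"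
      by (intro dim_le_card) auto
    also have "\<dots> \<le> k" using card_image_le[of "{..<k}" v] by simp
    finally show False using assms by simp
  qed
  then obtain y :: "real^'n" where y: "y \<noteq> 0" "\<forall>x\<in>span (v ` {..<k}). y \<bullet> x = 0"
    using span_not_UNIV_orthogonal by blast
  have "v b \<bullet> y = 0" if "b < k" for b
    using y(2) span_base[of "v b" "v ` {..<k}"] \<open>b < k\<close> by (auto simp: inner_commute)
  with y(1) show thesis by (rule that)
qed

text \<open>The invariant of the greedy construction of an eigenbasis: the first k vectors are orthonormal
  eigenvectors, and the a-th eigenvalue bounds the Rayleigh quotient on the orthogonal complement
  of the vectors before it (this will make the eigenvalues decreasing).\<close>
definition greedy_eigenbasis :: "real^'n^'n \<Rightarrow> nat \<Rightarrow> (nat \<Rightarrow> real^'n) \<Rightarrow> (nat \<Rightarrow> real) \<Rightarrow> bool"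
  where "greedy_eigenbasis S k v e \<longleftrightarrow>
    (\<forall>a<k. norm (v a) = 1 \<and> S *v v a = e a *\<^sub>R v a) \<and>
    (\<forall>a<k. \<forall>b<k. a \<noteq> b \<longrightarrow> v a \<bullet> v b = 0) \<and>
    (\<forall>a<k. \<forall>y. norm y = 1 \<longrightarrow> (\<forall>b<a. v b \<bullet> y = 0) \<longrightarrow> y \<bullet> (S *v y) \<le> e a)"

lemma greedy_eigenbasis_extend:
  assumes G: "greedy_eigenbasis S k v e"
    and u: "\<forall>b<k. v b \<bullet> u = 0" "norm u = 1" "S *v u = c *\<^sub>R u"
    and umax: "\<And>z. \<forall>b<k. v b \<bullet> z = 0 \<Longrightarrow> norm z = 1 \<Longrightarrow> z \<bullet> (S *v z) \<le> c"
  shows "greedy_eigenbasis S (Suc k) (v(k := u)) (e(k := c))"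
  unfolding greedy_eigenbasis_def
proof (intro conjI allI impI)
  note eig = G[unfolded greedy_eigenbasis_def, THEN conjunct1]
    and orth = G[unfolded greedy_eigenbasis_def, THEN conjunct2, THEN conjunct1]
    and var = G[unfolded greedy_eigenbasis_def, THEN conjunct2, THEN conjunct2]
  fix a assume "a < Suc k"
  then show "norm ((v(k := u)) a) = 1" "S *v (v(k := u)) a = (e(k := c)) a *\<^sub>R (v(k := u)) a"
    using eig u by (cases "a = k"; simp)+
next
  fix a b assume "a < Suc k" "b < Suc k" "a \<noteq> b"
  then show "(v(k := u)) a \<bullet> (v(k := u)) b = 0"
    using G u(1) unfolding greedy_eigenbasis_def
    by (cases "a = k"; cases "b = k") (auto simp: inner_commute)
next
  fix a y assume a: "a < Suc k" and y: "norm y = 1" and orth_y: "\<forall>b<a. (v(k := u)) b \<bullet> y = 0"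
  show "y \<bullet> (S *v y) \<le> (e(k := c)) a"
  proof (cases "a = k")
    case True
    then show ?thesis using umax[OF _ y] orth_y by auto
  next
    case False
    then have "a < k" using a by simp
    moreover have "\<forall>b<a. v b \<bullet> y = 0" using orth_y \<open>a < k\<close> by auto
    ultimately show ?thesis using G y False unfolding greedy_eigenbasis_def by simp
  qed
qed

text \<open>Greedy construction: the next vector maximizes the Rayleigh quotient on the (nonzero,
  S-invariant) orthogonal complement of the previous ones.\<close>
lemma greedy_eigenbasis_exists:
  fixes S :: "real^'n^'n"
  assumes symS: "transpose S = S" and k: "k \<le> CARD('n)"
  shows "\<exists>v e. greedy_eigenbasis S k v e"
  using k
proof (induction k)
  case 0
  show ?case by (simp add: greedy_eigenbasis_def)
next
  case (Suc k)
  then obtain v e where G: "greedy_eigenbasis S k v e" by auto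
  define W where "W = {y. \<forall>b<k. v b \<bullet> y = 0}"
  have W: "subspace W" unfolding W_def subspace_def by (simp add: inner_add_right)
  have W_inv: "S *v y \<in> W" if "y \<in> W" for y
    using that G unfolding W_def greedy_eigenbasis_def
    by (simp add: symmetric_inner_swap[OF symS, symmetric])
  have "k < CARD('n)" using Suc.prems by simp
  then obtain y where y: "y \<noteq> 0" "\<And>b. b < k \<Longrightarrow> v b \<bullet> y = 0"
    by (rule exists_orthogonal_nonzero[of k v]) blast
  have "y \<in> W" using y(2) unfolding W_def by simp
  then obtain u where uW: "u \<in> W" and un: "norm u = 1"
    and umax: "\<And>z. z \<in> W \<Longrightarrow> norm z = 1 \<Longrightarrow> z \<bullet> (S *v z) \<le> u \<bullet> (S *v u)"
    using rayleigh_maximizer_exists[OF W _ y(1)] by metis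
  have "S *v u = (u \<bullet> (S *v u)) *\<^sub>R u"
    by (rule rayleigh_maximizer_eigenvector[OF symS W W_inv uW un umax])
  with uW un umax have "greedy_eigenbasis S (Suc k) (v(k := u)) (e(k := u \<bullet> (S *v u)))"
    by (intro greedy_eigenbasis_extend[OF G]) (auto simp: W_def)
  then show ?case by blast
qed

lemma symmetric_sorted_eigenbasis:
  fixes S :: "real^'n^'n"
  assumes symS: "transpose S = S"
  obtains v e where
    "\<And>a. a < CARD('n) \<Longrightarrow> norm (v a) = 1" "\<And>a. a < CARD('n) \<Longrightarrow> S *v v a = e a *\<^sub>R v a"
    "\<And>a b. a < CARD('n) \<Longrightarrow> b < CARD('n) \<Longrightarrow> a \<noteq> b \<Longrightarrow> v a \<bullet> v b = 0"
    "\<And>a b. b \<le> a \<Longrightarrow> a < CARD('n) \<Longrightarrow> e a \<le> e b"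
    "\<And>y. norm y = 1 \<Longrightarrow> y \<bullet> (S *v y) \<le> e 0"
proof -
  obtain v e where eig: "\<forall>a<CARD('n). norm (v a) = 1 \<and> S *v v a = e a *\<^sub>R v a"
    and orth: "\<forall>a<CARD('n). \<forall>b<CARD('n). a \<noteq> b \<longrightarrow> v a \<bullet> v b = 0"
    and var: "\<forall>a<CARD('n). \<forall>y. norm y = 1 \<longrightarrow> (\<forall>b<a. v b \<bullet> y = 0) \<longrightarrow> y \<bullet> (S *v y) \<le> e a"
    using greedy_eigenbasis_exists[OF symS order.refl] unfolding greedy_eigenbasis_def by blast
  have rayleigh: "v a \<bullet> (S *v v a) = e a" if "a < CARD('n)" for a
    using eig that by (simp add: norm_eq_1)
  have anti: "e a \<le> e b" if "b \<le> a" "a < CARD('n)" for a b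
  proof (cases "a = b")
    case False
    then have "\<forall>c<b. v c \<bullet> v a = 0" using orth that by auto
    moreover have "b < CARD('n)" "norm (v a) = 1" using eig that by auto
    ultimately have "v a \<bullet> (S *v v a) \<le> e b" using var by blast
    then show ?thesis using rayleigh[OF \<open>a < CARD('n)\<close>] by simp
  qed simp
  show thesis
    by (rule that[of v e]) (use eig orth anti var in auto)
qed

section \<open>Existence of a diagonalization\<close>

lemma gtr_dirichlet_form:
  fixes \<pi> :: "(real, 'n::{finite,linorder}) vec" and Q :: "((real, 'n) vec, 'n) vec"
  assumes G: "GTR \<pi> Q"
  shows "(\<Sum>i\<in>UNIV. \<Sum>j\<in>UNIV. \<pi> $ i * Q $ i $ j * x i * x j)
       = - (1/2) * (\<Sum>i\<in>UNIV. \<Sum>j\<in>UNIV. \<pi> $ i * Q $ i $ j * (x i - x j)\<^sup>2)"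
proof -
  have rows: "(\<Sum>j\<in>UNIV. Q $ i $ j) = 0" for i using G unfolding GTR_def by blast
  have rev: "\<pi> $ i * Q $ i $ j = \<pi> $ j * Q $ j $ i" for i j using G unfolding GTR_def by blast
  have sq_left: "(\<Sum>i\<in>UNIV. \<Sum>j\<in>UNIV. \<pi> $ i * Q $ i $ j * (x i)\<^sup>2) = 0"
    by (simp add: sum_distrib_left[symmetric] sum_distrib_right[symmetric] rows
        mult.commute[of _ "(x _)\<^sup>2"] mult.assoc)
  have "(\<Sum>i\<in>UNIV. \<Sum>j\<in>UNIV. \<pi> $ i * Q $ i $ j * (x j)\<^sup>2)
      = (\<Sum>j\<in>UNIV. \<Sum>i\<in>UNIV. \<pi> $ j * Q $ j $ i * (x j)\<^sup>2)"
    by (subst sum.swap) (simp add: rev)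
  then have sq_right: "(\<Sum>i\<in>UNIV. \<Sum>j\<in>UNIV. \<pi> $ i * Q $ i $ j * (x j)\<^sup>2) = 0"
    using sq_left by simp
  have "(\<Sum>i\<in>UNIV. \<Sum>j\<in>UNIV. \<pi> $ i * Q $ i $ j * (x i - x j)\<^sup>2)
     = (\<Sum>i\<in>UNIV. \<Sum>j\<in>UNIV. \<pi> $ i * Q $ i $ j * (x i)\<^sup>2)
       + (\<Sum>i\<in>UNIV. \<Sum>j\<in>UNIV. \<pi> $ i * Q $ i $ j * (x j)\<^sup>2)
       - 2 * (\<Sum>i\<in>UNIV. \<Sum>j\<in>UNIV. \<pi> $ i * Q $ i $ j * x i * x j)"
    by (simp add: sum.distrib[symmetric] sum_subtractf[symmetric] sum_distrib_left
        power2_eq_square algebra_simps)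
  then show ?thesis using sq_left sq_right by simp
qed

text \<open>Hence the form is nonpositive and vanishes only on constant vectors (Q is irreducible).\<close>
lemma gtr_form_nonpos:
  fixes \<pi> :: "(real, 'n::{finite,linorder}) vec" and Q :: "((real, 'n) vec, 'n) vec"
  assumes G: "GTR \<pi> Q"
  shows "(\<Sum>i\<in>UNIV. \<Sum>j\<in>UNIV. \<pi> $ i * Q $ i $ j * x i * x j) \<le> 0"
    and "(\<Sum>i\<in>UNIV. \<Sum>j\<in>UNIV. \<pi> $ i * Q $ i $ j * x i * x j) = 0 \<Longrightarrow> x i = x j"
proof -
  have pos_rate: "\<pi> $ i * Q $ i $ j > 0" if "i \<noteq> j" for i j
    using G that unfolding GTR_def by (simp add: mult_pos_pos)
  have term_nonneg: "0 \<le> \<pi> $ i * Q $ i $ j * (x i - x j)\<^sup>2" for i j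
    using pos_rate[of i j] by (cases "i = j") simp_all
  then show "(\<Sum>i\<in>UNIV. \<Sum>j\<in>UNIV. \<pi> $ i * Q $ i $ j * x i * x j) \<le> 0"
    unfolding gtr_dirichlet_form[OF G] by (simp add: sum_nonneg)
  assume "(\<Sum>i\<in>UNIV. \<Sum>j\<in>UNIV. \<pi> $ i * Q $ i $ j * x i * x j) = 0"
  then have "(\<Sum>i\<in>UNIV. \<Sum>j\<in>UNIV. \<pi> $ i * Q $ i $ j * (x i - x j)\<^sup>2) = 0"
    unfolding gtr_dirichlet_form[OF G] by simp
  then have "(\<Sum>j\<in>UNIV. \<pi> $ i * Q $ i $ j * (x i - x j)\<^sup>2) = 0"
    using sum_nonneg_eq_0_iff[of UNIV "\<lambda>i. \<Sum>j\<in>UNIV. \<pi> $ i * Q $ i $ j * (x i - x j)\<^sup>2"]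
      term_nonneg by (simp add: sum_nonneg)
  then have "\<pi> $ i * Q $ i $ j * (x i - x j)\<^sup>2 = 0"
    by (subst (asm) sum_nonneg_eq_0_iff) (auto intro: term_nonneg)
  then show "x i = x j" using pos_rate[of i j] by (cases "i = j") auto
qed

text \<open>Conjugating by diag(sqrt pi) makes a reversible Q symmetric; sqrt pi spans its kernel.\<close>
definition sqrt_pi :: "real^'n \<Rightarrow> real^'n" where
  "sqrt_pi \<pi> = (\<chi> i. sqrt (\<pi> $ i))"

definition sym_rate :: "real^'n \<Rightarrow> real^'n^'n \<Rightarrow> real^'n^'n" where
  "sym_rate \<pi> Q = (\<chi> i j. sqrt (\<pi> $ i) * Q $ i $ j / sqrt (\<pi> $ j))"

lemma sym_rate_symmetric:
  assumes G: "GTR \<pi> Q"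
  shows "transpose (sym_rate \<pi> Q) = sym_rate \<pi> Q"
proof -
  have pos: "\<pi> $ i > 0" for i using G unfolding GTR_def by blast
  have rev: "\<pi> $ i * Q $ i $ j = \<pi> $ j * Q $ j $ i" for i j using G unfolding GTR_def by blast
  have "sqrt (\<pi> $ i) * Q $ i $ j / sqrt (\<pi> $ j) = \<pi> $ i * Q $ i $ j / (sqrt (\<pi> $ i) * sqrt (\<pi> $ j))"
    for i j using pos[of i] pos[of j]
    by (simp add: field_simps)
  then show ?thesis by (simp add: vec_eq_iff transpose_def sym_rate_def rev mult.commute)
qed

lemma sym_rate_form:
  assumes pos: "\<And>i. \<pi> $ i > 0"
  shows "y \<bullet> (sym_rate \<pi> Q *v y) = (\<Sum>i\<in>UNIV. \<Sum>j\<in>UNIV.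
           \<pi> $ i * Q $ i $ j * (y $ i / sqrt (\<pi> $ i)) * (y $ j / sqrt (\<pi> $ j)))"
proof -
  have "y \<bullet> (sym_rate \<pi> Q *v y)
      = (\<Sum>i\<in>UNIV. \<Sum>j\<in>UNIV. y $ i * (sqrt (\<pi> $ i) * Q $ i $ j / sqrt (\<pi> $ j)) * y $ j)"
    unfolding inner_vec_def matrix_vector_mult_def sym_rate_def by (simp add: sum_distrib_left mult_ac)
  also have "\<dots> = (\<Sum>i\<in>UNIV. \<Sum>j\<in>UNIV.
           \<pi> $ i * Q $ i $ j * (y $ i / sqrt (\<pi> $ i)) * (y $ j / sqrt (\<pi> $ j)))"
  proof (intro sum.cong refl)
    fix i j
    have "\<pi> $ i * Q $ i $ j * (y $ i / sqrt (\<pi> $ i)) * (y $ j / sqrt (\<pi> $ j))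
        = (\<pi> $ i / sqrt (\<pi> $ i)) * Q $ i $ j * y $ i * y $ j / sqrt (\<pi> $ j)"
      by simp
    moreover have "\<pi> $ i / sqrt (\<pi> $ i) = sqrt (\<pi> $ i)"
      using pos[of i] by (simp add: real_div_sqrt less_imp_le)
    ultimately show "y $ i * (sqrt (\<pi> $ i) * Q $ i $ j / sqrt (\<pi> $ j)) * y $ j
        = \<pi> $ i * Q $ i $ j * (y $ i / sqrt (\<pi> $ i)) * (y $ j / sqrt (\<pi> $ j))"
      by (simp add: mult_ac)
  qed
  finally show ?thesis .
qed

lemma sym_rate_sqrt_pi:
  assumes G: "GTR \<pi> Q"
  shows "sym_rate \<pi> Q *v sqrt_pi \<pi> = 0" "norm (sqrt_pi \<pi>) = 1"
proof -
  have pos: "\<pi> $ i > 0" for i using G unfolding GTR_def by blast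
  have rows: "(\<Sum>j\<in>UNIV. Q $ i $ j) = 0" for i using G unfolding GTR_def by blast
  show "sym_rate \<pi> Q *v sqrt_pi \<pi> = 0"
    unfolding sym_rate_def sqrt_pi_def matrix_vector_mult_def
    using pos by (simp add: vec_eq_iff sum_distrib_left[symmetric] rows less_imp_neq[symmetric])
  have "sqrt_pi \<pi> \<bullet> sqrt_pi \<pi> = 1"
    unfolding sqrt_pi_def inner_vec_def using G pos unfolding GTR_def by (simp add: less_imp_le)
  then show "norm (sqrt_pi \<pi>) = 1" by (simp add: norm_eq_1)
qed

lemma sym_rate_kernel:
  fixes \<pi> :: "(real, 'n::{finite,linorder}) vec" and Q :: "((real, 'n) vec, 'n) vec"
  assumes G: "GTR \<pi> Q" and zero: "y \<bullet> (sym_rate \<pi> Q *v y) = 0"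
  shows "\<exists>c. y = c *\<^sub>R sqrt_pi \<pi>"
proof -
  have pos: "\<pi> $ i > 0" for i using G unfolding GTR_def by blast
  have "y $ l / sqrt (\<pi> $ l) = y $ first_idx / sqrt (\<pi> $ first_idx)" for l
    using gtr_form_nonpos(2)[OF G, of "\<lambda>l. y $ l / sqrt (\<pi> $ l)"] zero
    unfolding sym_rate_form[OF pos] by blast
  then have "y = (y $ first_idx / sqrt (\<pi> $ first_idx)) *\<^sub>R sqrt_pi \<pi>"
    unfolding sqrt_pi_def using pos by (simp add: vec_eq_iff field_simps less_imp_neq[symmetric])
  then show ?thesis by blast
qed

text \<open>In a sorted eigenbasis of the symmetrized GTR matrix the top eigenvalue is 0, with an
  eigenvector proportional to sqrt pi; all other eigenvectors are orthogonal to sqrt pi and have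
  negative eigenvalues, since the form vanishes only on multiples of sqrt pi.\<close>
lemma gtr_eigenvalue_signs:
  fixes \<pi> :: "(real, 'n::{finite,linorder}) vec" and Q :: "((real, 'n) vec, 'n) vec"
  assumes G: "GTR \<pi> Q"
    and unit: "\<And>a. a < CARD('n) \<Longrightarrow> norm (v a) = 1"
    and eig: "\<And>a. a < CARD('n) \<Longrightarrow> sym_rate \<pi> Q *v v a = e a *\<^sub>R v a"
    and orth: "\<And>a b. a < CARD('n) \<Longrightarrow> b < CARD('n) \<Longrightarrow> a \<noteq> b \<Longrightarrow> v a \<bullet> v b = 0"
    and anti: "\<And>a b. b \<le> a \<Longrightarrow> a < CARD('n) \<Longrightarrow> e a \<le> e b"
    and top: "\<And>y. norm y = 1 \<Longrightarrow> y \<bullet> (sym_rate \<pi> Q *v y) \<le> e 0"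
  shows "e 0 = 0" "\<And>a. 0 < a \<Longrightarrow> a < CARD('n) \<Longrightarrow> v a \<bullet> sqrt_pi \<pi> = 0 \<and> e a < 0"
proof -
  have pos: "\<pi> $ i > 0" for i using G unfolding GTR_def by blast
  define \<sigma> where "\<sigma> = sqrt_pi \<pi>"
  note \<sigma> = sym_rate_sqrt_pi[OF G, folded \<sigma>_def]
  have rayleigh: "v a \<bullet> (sym_rate \<pi> Q *v v a) = e a" if "a < CARD('n)" for a
    using unit[OF that] eig[OF that] by (simp add: norm_eq_1)
  have n0: "0 < CARD('n)" by simp
  have nonpos: "v 0 \<bullet> (sym_rate \<pi> Q *v v 0) \<le> 0"
    unfolding sym_rate_form[OF pos] by (rule gtr_form_nonpos(1)[OF G])
  show e0: "e 0 = 0"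
    using top[OF \<sigma>(2)] \<sigma>(1) nonpos rayleigh[OF n0] by simp
  have kernel: "\<exists>c. v a = c *\<^sub>R \<sigma>" if "a < CARD('n)" "e a = 0" for a
    using sym_rate_kernel[OF G] rayleigh[OF that(1)] that(2) unfolding \<sigma>_def by metis
  obtain c0 where c0: "v 0 = c0 *\<^sub>R \<sigma>" using kernel[OF n0 e0] by blast
  have "c0 \<noteq> 0" using unit[OF n0] c0 by auto
  then have v_orth_\<sigma>: "v a \<bullet> \<sigma> = 0" if "0 < a" "a < CARD('n)" for a
    using orth[OF that(2) n0] that c0 by simp
  have neg: "e a < 0" if a: "0 < a" "a < CARD('n)" for a
  proof -
    have "e a \<noteq> 0"
    proof
      assume "e a = 0"
      then obtain c where c: "v a = c *\<^sub>R \<sigma>" using kernel[OF a(2)] by blast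
      then have "c = 0" using v_orth_\<sigma>[OF a] \<sigma>(2) by (auto simp: norm_eq_1)
      then show False using c unit[OF a(2)] by simp
    qed
    then show ?thesis using anti[of 0 a] a e0 by simp
  qed
  show "v a \<bullet> sqrt_pi \<pi> = 0 \<and> e a < 0" if "0 < a" "a < CARD('n)" for a
    using v_orth_\<sigma>[OF that] neg[OF that] unfolding \<sigma>_def by simp
qed

lemma gtr_sorted_eigenbasis:
  fixes \<pi> :: "(real, 'n::{finite,linorder}) vec" and Q :: "((real, 'n) vec, 'n) vec"
  assumes G: "GTR \<pi> Q"
  obtains w e where
    "\<And>a. a < CARD('n) \<Longrightarrow> sym_rate \<pi> Q *v w a = e a *\<^sub>R w a"
    "\<And>a b. a < CARD('n) \<Longrightarrow> b < CARD('n) \<Longrightarrow> w a \<bullet> w b = (if a = b then 1 else 0)"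
    "w 0 = sqrt_pi \<pi>" "e 0 = 0" "\<And>a. 0 < a \<Longrightarrow> a < CARD('n) \<Longrightarrow> e a < 0"
    "\<And>a b. b \<le> a \<Longrightarrow> a < CARD('n) \<Longrightarrow> e a \<le> e b"
proof -
  obtain v e where unit: "\<And>a. a < CARD('n) \<Longrightarrow> norm (v a) = 1"
    and eig: "\<And>a. a < CARD('n) \<Longrightarrow> sym_rate \<pi> Q *v v a = e a *\<^sub>R v a"
    and orth: "\<And>a b. a < CARD('n) \<Longrightarrow> b < CARD('n) \<Longrightarrow> a \<noteq> b \<Longrightarrow> v a \<bullet> v b = 0"
    and anti: "\<And>a b. b \<le> a \<Longrightarrow> a < CARD('n) \<Longrightarrow> e a \<le> e b"
    and top: "\<And>y. norm y = 1 \<Longrightarrow> y \<bullet> (sym_rate \<pi> Q *v y) \<le> e 0"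
    by (rule symmetric_sorted_eigenbasis[OF sym_rate_symmetric[OF G]]) blast
  note signs = gtr_eigenvalue_signs[where v = v and e = e, OF G unit eig orth anti top]
  note \<sigma> = sym_rate_sqrt_pi[OF G]
  define w where "w = v(0 := sqrt_pi \<pi>)"
  show thesis
  proof (rule that[of w e])
    show "sym_rate \<pi> Q *v w a = e a *\<^sub>R w a" if "a < CARD('n)" for a
      using eig[OF that] \<sigma>(1) signs(1) unfolding w_def by (cases "a = 0") simp_all
  next
    show "w a \<bullet> w b = (if a = b then 1 else 0)" if "a < CARD('n)" "b < CARD('n)" for a b
      using that unit orth signs(2) \<sigma>(2) unfolding w_def
      by (cases "a = 0"; cases "b = 0") (auto simp: norm_eq_1 inner_commute)
  qed (use signs anti in \<open>simp_all add: w_def\<close>)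
qed

definition state_index :: "'n::{finite,linorder} \<Rightarrow> nat" where
  "state_index i = card {j. j < i}"

lemma state_index_less: "i < j \<Longrightarrow> state_index i < state_index j"
  unfolding state_index_def by (rule psubset_card_mono) auto

lemma state_index_bound: "state_index (i::'n::{finite,linorder}) < CARD('n)"
  unfolding state_index_def by (rule psubset_card_mono) auto

lemma state_index_mono: "i \<le> j \<Longrightarrow> state_index i \<le> state_index j"
  using state_index_less[of i j] by (metis order.order_iff_strict less_imp_le)

lemma state_index_inj: "inj state_index"
  by (rule injI) (metis state_index_less less_irrefl linorder_neqE)

lemma state_index_first: "state_index (first_idx :: 'n::{finite,linorder}) = 0"
proof -
  have "first_idx = Min (UNIV :: 'n set)" unfolding first_idx_def
    by (rule Least_equality) auto
  then have "first_idx \<le> j" for j :: 'n by (metis Min_le finite UNIV_I)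
  then show ?thesis unfolding state_index_def by (auto simp: not_less[symmetric])
qed

text \<open>The candidate diagonalizer: eigenvectors of the symmetrized matrix as columns, rescaled by
  1/sqrt pi.\<close>
definition scaled_eigenmatrix ::
    "(real, 'n::{finite,linorder}) vec \<Rightarrow> (nat \<Rightarrow> (real, 'n) vec) \<Rightarrow> ((real, 'n) vec, 'n) vec" where
  "scaled_eigenmatrix \<pi> w = (\<chi> l a. w (state_index a) $ l / sqrt (\<pi> $ l))"

lemma scaled_eigenmatrix_rows:
  fixes w :: "nat \<Rightarrow> (real, 'n::{finite,linorder}) vec"
  assumes pos: "\<And>i. \<pi> $ i > 0"
    and orth: "\<And>a b. a < CARD('n) \<Longrightarrow> b < CARD('n) \<Longrightarrow> w a \<bullet> w b = (if a = b then 1 else 0)"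
  shows "scaled_eigenmatrix \<pi> w ** transpose (scaled_eigenmatrix \<pi> w) = diagm (\<lambda>i. inverse (\<pi> $ i))"
proof -
  define V :: "((real, 'n) vec, 'n) vec" where "V = (\<chi> l a. w (state_index a) $ l)"
  have "(transpose V ** V) $ a $ b = (if a = b then 1 else 0)" for a b
  proof -
    have "(transpose V ** V) $ a $ b = w (state_index a) \<bullet> w (state_index b)"
      unfolding V_def by (simp add: mat_mult_entry transpose_def inner_vec_def)
    then show ?thesis
      using orth[OF state_index_bound state_index_bound] state_index_inj by (metis injD)
  qed
  then have "transpose V ** V = mat 1" by (simp add: vec_eq_iff mat_def)
  then have VVt: "V ** transpose V = mat 1" using matrix_left_right_inverse by blast
  have "(scaled_eigenmatrix \<pi> w ** transpose (scaled_eigenmatrix \<pi> w)) $ l $ m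
      = (V ** transpose V) $ l $ m / (sqrt (\<pi> $ l) * sqrt (\<pi> $ m))" for l m
    unfolding scaled_eigenmatrix_def V_def by (simp add: mat_mult_entry transpose_def sum_divide_distrib)
  then show ?thesis
    using pos by (auto simp: VVt vec_eq_iff diagm_entry mat_def abs_of_pos inverse_eq_divide)
qed

lemma scaled_eigenmatrix_eigen:
  fixes w :: "nat \<Rightarrow> (real, 'n::{finite,linorder}) vec"
  assumes pos: "\<And>i. \<pi> $ i > 0"
    and eig: "\<And>a. a < CARD('n) \<Longrightarrow> sym_rate \<pi> Q *v w a = e a *\<^sub>R w a"
  shows "Q ** scaled_eigenmatrix \<pi> w = scaled_eigenmatrix \<pi> w ** diagm (\<lambda>a. e (state_index a))"
proof -
  have "(Q ** scaled_eigenmatrix \<pi> w) $ l $ a = scaled_eigenmatrix \<pi> w $ l $ a * e (state_index a)"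
    for l a
  proof -
    let ?x = "w (state_index a)"
    have "(sym_rate \<pi> Q *v ?x) $ l = e (state_index a) * ?x $ l"
      using eig[OF state_index_bound] by simp
    then have "sqrt (\<pi> $ l) * (\<Sum>m\<in>UNIV. Q $ l $ m * (?x $ m / sqrt (\<pi> $ m))) = e (state_index a) * ?x $ l"
      unfolding sym_rate_def matrix_vector_mult_def by (simp add: sum_distrib_left mult_ac)
    moreover have "sqrt (\<pi> $ l) \<noteq> 0" using pos[of l] by simp
    ultimately have "(\<Sum>m\<in>UNIV. Q $ l $ m * (?x $ m / sqrt (\<pi> $ m))) = e (state_index a) * ?x $ l / sqrt (\<pi> $ l)"
      by (simp add: field_simps)
    then show ?thesis unfolding scaled_eigenmatrix_def by (simp add: mat_mult_entry)
  qed
  then show ?thesis by (simp add: vec_eq_iff mult_diagm_entry)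
qed

lemma diagonalizes_of_eigenbasis:
  fixes w :: "nat \<Rightarrow> (real, 'n::{finite,linorder}) vec"
  assumes pos: "\<And>i. \<pi> $ i > 0"
    and eig: "\<And>a. a < CARD('n) \<Longrightarrow> sym_rate \<pi> Q *v w a = e a *\<^sub>R w a"
    and orth: "\<And>a b. a < CARD('n) \<Longrightarrow> b < CARD('n) \<Longrightarrow> w a \<bullet> w b = (if a = b then 1 else 0)"
    and w0: "w 0 = sqrt_pi \<pi>" and e0: "e 0 = 0"
    and neg: "\<And>a. 0 < a \<Longrightarrow> a < CARD('n) \<Longrightarrow> e a < 0"
    and anti: "\<And>a b. b \<le> a \<Longrightarrow> a < CARD('n) \<Longrightarrow> e a \<le> e b"
  shows "diagonalizes \<pi> Q (scaled_eigenmatrix \<pi> w) (\<lambda>a. e (state_index a))"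
proof -
  define U where "U = scaled_eigenmatrix \<pi> w"
  define lam where "lam a = e (state_index a)" for a :: 'n
  have UUt: "U ** transpose U = diagm (\<lambda>i. inverse (\<pi> $ i))"
    unfolding U_def by (rule scaled_eigenmatrix_rows[OF pos orth])
  note inv = pi_adjoint_inverse[OF UUt pos]
  have QU: "Q ** U = U ** diagm lam"
    unfolding U_def lam_def by (rule scaled_eigenmatrix_eigen[OF pos eig])
  have "Q = Q ** (U ** pi_adjoint \<pi> U)" using inv(1) by simp
  also have "\<dots> = U ** diagm lam ** pi_adjoint \<pi> U"
    by (simp add: matrix_mul_assoc QU)
  finally have Q_eq: "Q = U ** diagm lam ** matrix_inv U" using inv(3) by simp
  have first: "lam first_idx = 0" unfolding lam_def state_index_first e0 ..
  have negative: "\<forall>i. i \<noteq> first_idx \<longrightarrow> lam i < 0"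
  proof (intro allI impI)
    fix i :: 'n assume "i \<noteq> first_idx"
    then have "state_index i \<noteq> 0" using state_index_first state_index_inj by (metis inj_eq)
    then show "lam i < 0" unfolding lam_def using neg state_index_bound by auto
  qed
  have sorted: "\<forall>i j. i \<le> j \<longrightarrow> lam j \<le> lam i"
    unfolding lam_def using anti state_index_mono state_index_bound by blast
  have first_col: "\<forall>l. U $ l $ first_idx = 1"
    unfolding U_def scaled_eigenmatrix_def using pos
    by (simp add: state_index_first w0 sqrt_pi_def less_imp_neq[symmetric])
  have "diagonalizes \<pi> Q U lam"
    unfolding diagonalizes_def by (intro conjI Q_eq first negative sorted UUt first_col)
  moreover have "(\<lambda>a. e (state_index a)) = lam" unfolding lam_def ..
  ultimately show ?thesis unfolding U_def by simp
qed

lemma exists_diagonalization: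
  fixes \<pi> :: "(real, 'n::{finite,linorder}) vec" and Q :: "((real, 'n) vec, 'n) vec"
  assumes G: "GTR \<pi> Q"
  obtains U lam where "diagonalizes \<pi> Q U lam"
proof -
  have pos: "\<pi> $ i > 0" for i using G unfolding GTR_def by blast
  obtain w e where
    "\<And>a. a < CARD('n) \<Longrightarrow> sym_rate \<pi> Q *v w a = e a *\<^sub>R w a"
    "\<And>a b. a < CARD('n) \<Longrightarrow> b < CARD('n) \<Longrightarrow> w a \<bullet> w b = (if a = b then 1 else 0)"
    "w 0 = sqrt_pi \<pi>" "e 0 = 0" "\<And>a. 0 < a \<Longrightarrow> a < CARD('n) \<Longrightarrow> e a < 0"
    "\<And>a b. b \<le> a \<Longrightarrow> a < CARD('n) \<Longrightarrow> e a \<le> e b"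
    by (rule gtr_sorted_eigenbasis[OF G]) blast
  from diagonalizes_of_eigenbasis[OF pos this] show thesis by (rule that)
qed

section \<open>Identifiability\<close>

lemma edges_ok_nonneg:
  assumes "edges_ok ta tb tc"
  shows "ta \<ge> 0" "tb \<ge> 0" "tc \<ge> 0" "ta + tb > 0" "ta + tc > 0" "tb + tc > 0"
  using assms unfolding edges_ok_def by auto

lemma stationary_identifiable:
  assumes D: "diagonalizes \<pi> Q U lam" and D': "diagonalizes \<pi>' Q' U' lam'"
    and pos: "\<And>i. \<pi> $ i > 0" and pos': "\<And>i. \<pi>' $ i > 0"
    and R: "rate_dist \<mu>" and R': "rate_dist \<mu>'"
    and E: "edges_ok ta tb tc" and E': "edges_ok ta' tb' tc'"
    and sameP: "\<And>i j k. jointP \<pi> Q \<mu> ta tb tc i j k = jointP \<pi>' Q' \<mu>' ta' tb' tc' i j k"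
  shows "\<pi> = \<pi>'"
proof (subst vec_eq_iff, rule allI)
  fix i
  have "\<pi> $ i = (\<Sum>j\<in>UNIV. \<Sum>k\<in>UNIV. jointP \<pi> Q \<mu> ta tb tc i j k)"
    using jointP_single_marginal[OF D pos R edges_ok_nonneg(1-3)[OF E]] by simp
  also have "\<dots> = (\<Sum>j\<in>UNIV. \<Sum>k\<in>UNIV. jointP \<pi>' Q' \<mu>' ta' tb' tc' i j k)"
    by (simp add: sameP)
  also have "\<dots> = \<pi>' $ i"
    using jointP_single_marginal[OF D' pos' R' edges_ok_nonneg(1-3)[OF E']] by simp
  finally show "\<pi> $ i = \<pi>' $ i" .
qed

text \<open>(2) The transforms of the eigenvalues at the three pairwise distances are determined; the
  pair matrices for the other two pairs come from permuting the taxa.\<close>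
lemma pair_transforms_identifiable:
  assumes D: "diagonalizes \<pi> Q U lam" and D': "diagonalizes \<pi> Q' U' lam'"
    and pos: "\<And>i. \<pi> $ i > 0" and R: "rate_dist \<mu>" and R': "rate_dist \<mu>'"
    and E: "edges_ok ta tb tc" and E': "edges_ok ta' tb' tc'"
    and sameP: "\<And>i j k. jointP \<pi> Q \<mu> ta tb tc i j k = jointP \<pi> Q' \<mu>' ta' tb' tc' i j k"
  shows "Lap \<mu> (lam a * (ta + tb)) = Lap \<mu>' (lam' a * (ta' + tb'))"
    "Lap \<mu> (lam a * (ta + tc)) = Lap \<mu>' (lam' a * (ta' + tc'))"
    "Lap \<mu> (lam a * (tb + tc)) = Lap \<mu>' (lam' a * (tb' + tc'))"
proof -
  note t = edges_ok_nonneg[OF E] and t' = edges_ok_nonneg[OF E']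
  have sameP_acb: "jointP \<pi> Q \<mu> ta tc tb i j k = jointP \<pi> Q' \<mu>' ta' tc' tb' i j k" for i j k
    using sameP[of i k j] jointP_swap_bc by metis
  have sameP_bca: "jointP \<pi> Q \<mu> tb tc ta i j k = jointP \<pi> Q' \<mu>' tb' tc' ta' i j k" for i j k
    using sameP[of k i j] jointP_rotate by metis
  show "Lap \<mu> (lam a * (ta + tb)) = Lap \<mu>' (lam' a * (ta' + tb'))"
    by (rule diagonalizer_transfer(1)[OF D D' pos R R' t(4) t'(4)
          pair_matrix_eq[OF D D' pos R R' t(1,2,3) t'(1,2,3) sameP]])
  show "Lap \<mu> (lam a * (ta + tc)) = Lap \<mu>' (lam' a * (ta' + tc'))"
    by (rule diagonalizer_transfer(1)[OF D D' pos R R' t(5) t'(5)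
          pair_matrix_eq[OF D D' pos R R' t(1,3,2) t'(1,3,2) sameP_acb]])
  show "Lap \<mu> (lam a * (tb + tc)) = Lap \<mu>' (lam' a * (tb' + tc'))"
    by (rule diagonalizer_transfer(1)[OF D D' pos R R' t(6) t'(6)
          pair_matrix_eq[OF D D' pos R R' t(2,3,1) t'(2,3,1) sameP_bca]])
qed

lemma diagonalizer_identifiable:
  assumes D: "diagonalizes \<pi> Q U lam" and D': "diagonalizes \<pi> Q' U' lam'"
    and pos: "\<And>i. \<pi> $ i > 0" and R: "rate_dist \<mu>" and R': "rate_dist \<mu>'"
    and E: "edges_ok ta tb tc" and E': "edges_ok ta' tb' tc'"
    and sameP: "\<And>i j k. jointP \<pi> Q \<mu> ta tb tc i j k = jointP \<pi> Q' \<mu>' ta' tb' tc' i j k"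
  shows "diagonalizes \<pi> Q' U lam'"
  using diagonalizer_transfer(2)[OF D D' pos R R' edges_ok_nonneg(4)[OF E] edges_ok_nonneg(4)[OF E']
      pair_matrix_eq[OF D D' pos R R' edges_ok_nonneg(1-3)[OF E] edges_ok_nonneg(1-3)[OF E'] sameP]] .

lemma diagonalizer_sets_identifiable:
  assumes D0: "diagonalizes \<pi> Q U0 lam0" and D1: "diagonalizes \<pi> Q' U1 lam1"
    and pos: "\<And>i. \<pi> $ i > 0" and R: "rate_dist \<mu>" and R': "rate_dist \<mu>'"
    and E: "edges_ok ta tb tc" and E': "edges_ok ta' tb' tc'"
    and sameP: "\<And>i j k. jointP \<pi> Q \<mu> ta tb tc i j k = jointP \<pi> Q' \<mu>' ta' tb' tc' i j k"
  shows "{U. \<exists>lam. diagonalizes \<pi> Q U lam} = {U. \<exists>lam. diagonalizes \<pi> Q' U lam}"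
proof (intro set_eqI iffI; clarsimp)
  fix U lam assume "diagonalizes \<pi> Q U lam"
  then show "\<exists>lam. diagonalizes \<pi> Q' U lam"
    using diagonalizer_identifiable[OF _ D1 pos R R' E E' sameP] by blast
next
  fix U lam assume "diagonalizes \<pi> Q' U lam"
  then show "\<exists>lam. diagonalizes \<pi> Q U lam"
    using diagonalizer_identifiable[OF _ D0 pos R' R E' E sameP[symmetric]] by blast
qed

text \<open>(3) With a common diagonalizer, the coefficients nu L(...) of the two spectral expansions
  coincide, since their difference is a tensor annihilated by the invertible U.\<close>
lemma triple_transforms_identifiable:
  assumes D: "diagonalizes \<pi> Q U lam" and D': "diagonalizes \<pi> Q' U lam'"
    and pos: "\<And>i. \<pi> $ i > 0" and R: "rate_dist \<mu>" and R': "rate_dist \<mu>'"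
    and E: "edges_ok ta tb tc" and E': "edges_ok ta' tb' tc'"
    and sameP: "\<And>i j k. jointP \<pi> Q \<mu> ta tb tc i j k = jointP \<pi> Q' \<mu>' ta' tb' tc' i j k"
    and nz: "nu \<pi> U a b c \<noteq> 0"
  shows "Lap \<mu> (lam a * ta + lam b * tb + lam c * tc) = Lap \<mu>' (lam' a * ta' + lam' b * tb' + lam' c * tc')"
proof -
  define X where "X a b c = nu \<pi> U a b c * (Lap \<mu> (lam a * ta + lam b * tb + lam c * tc)
         - Lap \<mu>' (lam' a * ta' + lam' b * tb' + lam' c * tc'))" for a b c
  have "(\<Sum>a\<in>UNIV. \<Sum>b\<in>UNIV. \<Sum>c\<in>UNIV. U $ i $ a * U $ j $ b * U $ k $ c * X a b c) = 0" for i j k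
  proof -
    have "jointP \<pi> Q \<mu> ta tb tc i j k - jointP \<pi> Q' \<mu>' ta' tb' tc' i j k
      = \<pi> $ i * \<pi> $ j * \<pi> $ k *
        (\<Sum>a\<in>UNIV. \<Sum>b\<in>UNIV. \<Sum>c\<in>UNIV. U $ i $ a * U $ j $ b * U $ k $ c * X a b c)"
      unfolding jointP_spectral_expansion[OF D pos R edges_ok_nonneg(1-3)[OF E]]
        jointP_spectral_expansion[OF D' pos R' edges_ok_nonneg(1-3)[OF E']]
      by (simp add: X_def sum_subtractf[symmetric] sum_distrib_left algebra_simps)
    moreover have "\<pi> $ i * \<pi> $ j * \<pi> $ k \<noteq> 0" using pos[of i] pos[of j] pos[of k] by simp
    ultimately show ?thesis using sameP[of i j k] by simp
  qed
  then have "X a b c = 0" by (rule orthonormal_cancel_tensor[OF diagonalizes_orthonormal[OF D pos]])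
  then show ?thesis using nz unfolding X_def by simp
qed

theorem proposition1:
  fixes \<pi> \<pi>' :: "(real, 'n::{finite,linorder}) vec"
    and Q Q' :: "((real, 'n) vec, 'n) vec"
    and \<mu> \<mu>' :: "real measure"
    and ta tb tc ta' tb' tc' :: real
  assumes "GTR \<pi> Q" and "rate_dist \<mu>" and "edges_ok ta tb tc"
    and "GTR \<pi>' Q'" and "rate_dist \<mu>'" and "edges_ok ta' tb' tc'"
    and sameP: "\<And>i j k. jointP \<pi> Q \<mu> ta tb tc i j k = jointP \<pi>' Q' \<mu>' ta' tb' tc' i j k"
  shows "\<pi> = \<pi>' \<and>
    {U. \<exists>lam. diagonalizes \<pi> Q U lam} = {U. \<exists>lam. diagonalizes \<pi>' Q' U lam} \<and>
    (\<forall>U lam U' lam' i. diagonalizes \<pi> Q U lam \<longrightarrow> diagonalizes \<pi>' Q' U' lam' \<longrightarrow>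
        Lap \<mu> (lam i * (ta + tb)) = Lap \<mu>' (lam' i * (ta' + tb')) \<and>
        Lap \<mu> (lam i * (ta + tc)) = Lap \<mu>' (lam' i * (ta' + tc')) \<and>
        Lap \<mu> (lam i * (tb + tc)) = Lap \<mu>' (lam' i * (tb' + tc'))) \<and>
    (\<exists>U lam lam'. diagonalizes \<pi> Q U lam \<and> diagonalizes \<pi>' Q' U lam' \<and>
        (\<forall>i j k. nu \<pi> U i j k \<noteq> 0 \<longrightarrow>
           Lap \<mu> (lam i * ta + lam j * tb + lam k * tc)
           = Lap \<mu>' (lam' i * ta' + lam' j * tb' + lam' k * tc')))"
proof -
  note R = assms(2) and R' = assms(5) and E = assms(3) and E' = assms(6)
  have pos: "\<And>i. \<pi> $ i > 0" using assms(1) unfolding GTR_def by blast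
  have pos': "\<And>i. \<pi>' $ i > 0" using assms(4) unfolding GTR_def by blast
  obtain U0 lam0 where D0: "diagonalizes \<pi> Q U0 lam0" using exists_diagonalization[OF assms(1)] .
  obtain U1 lam1 where D1: "diagonalizes \<pi>' Q' U1 lam1" using exists_diagonalization[OF assms(4)] .
  have pi_eq: "\<pi> = \<pi>'" by (rule stationary_identifiable[OF D0 D1 pos pos' R R' E E' sameP])
  note D1 = D1[folded pi_eq] and sameP = sameP[folded pi_eq]
  have D0': "diagonalizes \<pi> Q' U0 lam1"
    by (rule diagonalizer_identifiable[OF D0 D1 pos R R' E E' sameP])
  have sets: "{U. \<exists>lam. diagonalizes \<pi> Q U lam} = {U. \<exists>lam. diagonalizes \<pi> Q' U lam}"
    by (rule diagonalizer_sets_identifiable[OF D0 D1 pos R R' E E' sameP])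
  have pairs: "\<forall>U lam U' lam' i. diagonalizes \<pi> Q U lam \<longrightarrow> diagonalizes \<pi> Q' U' lam' \<longrightarrow>
        Lap \<mu> (lam i * (ta + tb)) = Lap \<mu>' (lam' i * (ta' + tb')) \<and>
        Lap \<mu> (lam i * (ta + tc)) = Lap \<mu>' (lam' i * (ta' + tc')) \<and>
        Lap \<mu> (lam i * (tb + tc)) = Lap \<mu>' (lam' i * (tb' + tc'))"
    by (intro allI impI conjI) (erule (1) pair_transforms_identifiable[OF _ _ pos R R' E E' sameP])+
  have triples: "\<forall>i j k. nu \<pi> U0 i j k \<noteq> 0 \<longrightarrow>
           Lap \<mu> (lam0 i * ta + lam0 j * tb + lam0 k * tc)
           = Lap \<mu>' (lam1 i * ta' + lam1 j * tb' + lam1 k * tc')"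
    by (intro allI impI) (rule triple_transforms_identifiable[OF D0 D0' pos R R' E E' sameP])
  show ?thesis
    unfolding pi_eq[symmetric]
    by (intro conjI exI[of _ U0] exI[of _ lam0] exI[of _ lam1]) (fact refl sets pairs D0 D0' triples)+
qed

end
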